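(* There is an algorithm that, given $p$, block sizes $m_0,\dots,m_{p-1}\ge0$ and homogeneous parameters $\alpha,\beta,\gamma\ge0$ (i.e. $\alpha_{ij}=\alpha$, $\beta_{ij}=\beta$, $\gamma_i=\gamma$ for all $i,j$), computes a (strongly) ordered communication tree on $\{0,\dots,p-1\}$ whose completion time is minimum among all ordered communication trees on $\{0,\dots,p-1\}$ with any root (no restriction on node degrees), using $O(p^3)$ arithmetic operations and comparisons and $O(p^2)$ space.
   Context: Processors $0,\dots,p-1$ (fully connected, one-ported); processor $i$ has a data block of size $m_i\ge0$; $\mathrm{Size}(R)=\sum_{i\in R}m_i$. Transmitting $s$ units between any two processors costs $\alpha+\beta s$; local copying of $s$ units costs $\gamma s$. A communication tree on a nonempty set $R$ with root $r\in R$ is either trivial ($R=\{r\}$), or the root $r$ with a sequence of entries $(E_0,\dots,E_j)$ where exactly one entry is a "local copy" marker, every other entry is a communication tree on a set $R_t$ with root $r_t$, there is at least one tree entry, and $\{r\}$ together with the $R_t$ partition $R$. Completion time: trivial tree $0$; otherwise $c_{-1}=0$, $c_t=c_{t-1}+\gamma m_r$ for the copy marker, $c_t=\max(c_{t-1},\mathrm{cost}(E_t))+\alpha+\beta\,\mathrm{Size}(R_t)$ for a tree entry; $\mathrm{cost}=c_j$. A communication tree is (strongly) ordered if its set is an interval $[i,\dots,j]$ of consecutive ranks, every tree entry is itself strongly ordered, and, identifying the copy marker with the interval $\{r\}$, the sets of the entries $E_0,\dots,E_j$ are consecutive intervals in increasing order. *)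

theory Defs
  imports Main "HOL.Real"
begin

text \<open>A communication tree: a root together with a list of entries; the entry
  None is the local copy marker, Some t is a subtree entry. The trivial tree
  on a singleton is Node r [].\<close>

datatype ctree = Node nat "ctree option list"

fun ct_root :: "ctree \<Rightarrow> nat" where
  "ct_root (Node r es) = r"

fun ct_verts :: "ctree \<Rightarrow> nat set" where
  "ct_verts (Node r es) =
     insert r (\<Union>x\<in>set es. (case x of None \<Rightarrow> {} | Some t \<Rightarrow> ct_verts t))"

definition entry_set :: "nat \<Rightarrow> ctree option \<Rightarrow> nat set" where
  "entry_set r x = (case x of None \<Rightarrow> {r} | Some t \<Rightarrow> ct_verts t)"

fun ct_wf :: "ctree \<Rightarrow> bool" where
  "ct_wf (Node r es) =
     ((es = [] \<or> (length (filter (\<lambda>x. x = None) es) = 1 \<and> (\<exists>x\<in>set es. x \<noteq> None)))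
      \<and> (\<forall>x\<in>set es. case x of None \<Rightarrow> True | Some t \<Rightarrow> ct_wf t)
      \<and> (\<forall>i j. i < j \<and> j < length es \<longrightarrow> entry_set r (es ! i) \<inter> entry_set r (es ! j) = {}))"

definition is_ctree :: "nat set \<Rightarrow> ctree \<Rightarrow> bool" where
  "is_ctree R T \<longleftrightarrow> ct_wf T \<and> ct_verts T = R"

definition Size :: "(nat \<Rightarrow> real) \<Rightarrow> nat set \<Rightarrow> real" where
  "Size m R = (\<Sum>i\<in>R. m i)"

fun ct_cost :: "(nat \<Rightarrow> real) \<Rightarrow> real \<Rightarrow> real \<Rightarrow> real \<Rightarrow> ctree \<Rightarrow> real" where
  "ct_cost m \<alpha> \<beta> \<gamma> (Node r es) =
     foldl (\<lambda>c x. case x of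
                    None \<Rightarrow> c + \<gamma> * m r
                  | Some t \<Rightarrow> max c (ct_cost m \<alpha> \<beta> \<gamma> t) + \<alpha> + \<beta> * Size m (ct_verts t))
           0 es"

fun consec_intervals :: "nat \<Rightarrow> nat set list \<Rightarrow> bool" where
  "consec_intervals a [] = True"
| "consec_intervals a (S # Ss) = (\<exists>b > a. S = {a..<b} \<and> consec_intervals b Ss)"

fun strongly_ordered :: "ctree \<Rightarrow> bool" where
  "strongly_ordered (Node r es) =
     (consec_intervals (Min (ct_verts (Node r es))) (map (entry_set r) es)
      \<and> (\<forall>x\<in>set es. case x of None \<Rightarrow> True | Some t \<Rightarrow> strongly_ordered t))"

fun ct_edges :: "ctree \<Rightarrow> (nat \<times> nat) set" where
  "ct_edges (Node r es) =
     (\<Union>x\<in>set es. case x of None \<Rightarrow> {} | Some t \<Rightarrow> insert (ct_root t, r) (ct_edges t))"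

text \<open>Integer arithmetic is restricted to addition and subtraction; real
  arithmetic is addition, subtraction, multiplication (real constants are
  integers only); there is no conversion
  from reals to integers other than through comparisons.\<close>

datatype iexp = IC int | IL iexp iexp | IAdd iexp iexp | ISub iexp iexp
datatype rexp = RC int | RL iexp iexp | RAdd rexp rexp | RSub rexp rexp | RMul rexp rexp
datatype bexp = BC bool | ILe iexp iexp | RLe rexp rexp | BNot bexp | BAnd bexp bexp
datatype com = SKIP | IStore iexp iexp iexp | RStore iexp iexp rexp
  | Seq com com | If bexp com com | While bexp com

record state =
  imem :: "int \<times> int \<Rightarrow> int"
  rmem :: "int \<times> int \<Rightarrow> real"
  iused :: "(int \<times> int) set"
  rused :: "(int \<times> int) set"

fun ival :: "iexp \<Rightarrow> state \<Rightarrow> int" where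
  "ival (IC k) s = k"
| "ival (IL a b) s = imem s (ival a s, ival b s)"
| "ival (IAdd a b) s = ival a s + ival b s"
| "ival (ISub a b) s = ival a s - ival b s"

fun rval :: "rexp \<Rightarrow> state \<Rightarrow> real" where
  "rval (RC k) s = of_int k"
| "rval (RL a b) s = rmem s (ival a s, ival b s)"
| "rval (RAdd a b) s = rval a s + rval b s"
| "rval (RSub a b) s = rval a s - rval b s"
| "rval (RMul a b) s = rval a s * rval b s"

fun bval :: "bexp \<Rightarrow> state \<Rightarrow> bool" where
  "bval (BC v) s = v"
| "bval (ILe a b) s = (ival a s \<le> ival b s)"
| "bval (RLe a b) s = (rval a s \<le> rval b s)"
| "bval (BNot b) s = (\<not> bval b s)"
| "bval (BAnd a b) s = (bval a s \<and> bval b s)"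

fun icost :: "iexp \<Rightarrow> nat" where
  "icost (IC k) = 1"
| "icost (IL a b) = 1 + icost a + icost b"
| "icost (IAdd a b) = 1 + icost a + icost b"
| "icost (ISub a b) = 1 + icost a + icost b"

fun rcost :: "rexp \<Rightarrow> nat" where
  "rcost (RC k) = 1"
| "rcost (RL a b) = 1 + icost a + icost b"
| "rcost (RAdd a b) = 1 + rcost a + rcost b"
| "rcost (RSub a b) = 1 + rcost a + rcost b"
| "rcost (RMul a b) = 1 + rcost a + rcost b"

fun bcost :: "bexp \<Rightarrow> nat" where
  "bcost (BC v) = 1"
| "bcost (ILe a b) = 1 + icost a + icost b"
| "bcost (RLe a b) = 1 + rcost a + rcost b"
| "bcost (BNot b) = 1 + bcost b"
| "bcost (BAnd a b) = 1 + bcost a + bcost b"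

inductive exec :: "com \<Rightarrow> state \<Rightarrow> nat \<Rightarrow> state \<Rightarrow> bool" where
  Skip: "exec SKIP s 1 s"
| IStore: "exec (IStore a b e) s (1 + icost a + icost b + icost e)
     (s\<lparr>imem := (imem s)((ival a s, ival b s) := ival e s),
        iused := insert (ival a s, ival b s) (iused s)\<rparr>)"
| RStore: "exec (RStore a b e) s (1 + icost a + icost b + rcost e)
     (s\<lparr>rmem := (rmem s)((ival a s, ival b s) := rval e s),
        rused := insert (ival a s, ival b s) (rused s)\<rparr>)"
| Seq: "exec c1 s t1 s1 \<Longrightarrow> exec c2 s1 t2 s2 \<Longrightarrow> exec (Seq c1 c2) s (t1 + t2) s2"
| IfT: "bval b s \<Longrightarrow> exec c1 s t s' \<Longrightarrow> exec (If b c1 c2) s (1 + bcost b + t) s'"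
| IfF: "\<not> bval b s \<Longrightarrow> exec c2 s t s' \<Longrightarrow> exec (If b c1 c2) s (1 + bcost b + t) s'"
| WhileF: "\<not> bval b s \<Longrightarrow> exec (While b c) s (1 + bcost b) s"
| WhileT: "bval b s \<Longrightarrow> exec c s t1 s1 \<Longrightarrow> exec (While b c) s1 t2 s2 \<Longrightarrow>
     exec (While b c) s (1 + bcost b + t1 + t2) s2"

text \<open>Space used: number of memory cells that ever held data (input cells and
  every cell written). Since these sets only grow, the final value is the maximum.\<close>
definition space :: "state \<Rightarrow> nat" where
  "space s = card (iused s) + card (rused s)"

definition input_state :: "nat \<Rightarrow> (nat \<Rightarrow> real) \<Rightarrow> real \<Rightarrow> real \<Rightarrow> real \<Rightarrow> state" where
  "input_state p m \<alpha> \<beta> \<gamma> =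
     \<lparr> imem = (\<lambda>_. 0)((0,0) := int p),
       rmem = (\<lambda>(a,i). if a = 0 \<and> 0 \<le> i \<and> i < int p then m (nat i)
                       else if a = 1 \<and> i = 0 then \<alpha>
                       else if a = 1 \<and> i = 1 then \<beta>
                       else if a = 1 \<and> i = 2 then \<gamma> else 0),
       iused = {(0,0)},
       rused = {(0, int i) | i. i < p} \<union> {(1,0),(1,1),(1,2)} \<rparr>"

text \<open>Output encoding: the integer cell (1,i), i<p, holds the parent of i in T
  (and -1 for the root). A strongly ordered tree is determined by its parent map.\<close>
definition outputs_tree :: "nat \<Rightarrow> state \<Rightarrow> ctree \<Rightarrow> bool" where
  "outputs_tree p s T \<longleftrightarrow>
     (\<forall>i<p. (i = ct_root T \<longrightarrow> imem s (1, int i) = -1)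
          \<and> (i \<noteq> ct_root T \<longrightarrow> imem s (1, int i) \<ge> 0 \<and> (i, nat (imem s (1, int i))) \<in> ct_edges T))"

end

theory Submission
  imports Defs
begin

text \<open>An ordered tree on an interval \<open>[i, a)\<close> is a root \<open>r\<close> with a list of entries whose sets
  tile \<open>[i, a)\<close> from left to right, the copy marker standing for \<open>{r}\<close>. The completion
  time of an entry list is computed from left to right, and appending an entry increases it
  monotonically in the time of the prefix and in that of the new subtree. So the least
  times of trees on \<open>[i, a)\<close> and of entry lists tiling \<open>[i, a)\<close> with and without the copy
  marker satisfy recurrences over the start of the last entry: \<open>O(p\<^sup>2)\<close> table entries, each
  a minimum over \<open>O(p)\<close> candidates. Recording the minimising splits, an optimal tree is read
  off the tables. A program for the unit-cost machine fills the tables row by row in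
  \<open>O(p\<^sup>3)\<close> steps and \<open>O(p\<^sup>2)\<close> cells, and then finds the parent of every vertex by
  descending from \<open>[0, p)\<close> through at most \<open>p\<close> levels, scanning \<open>O(p)\<close> splits at each.\<close>

fun tiling :: "nat \<Rightarrow> nat set list \<Rightarrow> nat \<Rightarrow> bool" where
  "tiling a [] b \<longleftrightarrow> a = b"
| "tiling a (X # Xs) b \<longleftrightarrow> (\<exists>c>a. X = {a..<c} \<and> tiling c Xs b)"

lemma singleton_eq_atLeastLessThan: "{r} = {c..<e} \<longleftrightarrow> r = c \<and> e = Suc c"
  by (metis atLeastLessThan_singleton atLeastLessThan_empty_iff2 atLeastLessThan_inj(1,2)
      insert_not_empty Suc_n_not_le_n linorder_not_le)

lemma tiling_length_le: "tiling a L b \<Longrightarrow> a + length L \<le> b"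
  by (induction L arbitrary: a) force+

lemma tiling_consec_intervals: "tiling a L b \<Longrightarrow> consec_intervals a L"
  by (induction L arbitrary: a) auto

lemma consec_intervals_tiling: "consec_intervals a L \<Longrightarrow> \<exists>b. tiling a L b"
proof (induction L arbitrary: a)
  case (Cons X L)
  then obtain b where "b > a" "X = {a..<b}" "consec_intervals b L" by auto
  with Cons.IH[of b] show ?case by auto
next
  case Nil
  show ?case by (rule exI[of _ a]) simp
qed

lemma tiling_Union: "tiling a L b \<Longrightarrow> \<Union> (set L) = {a..<b}"
proof (induction L arbitrary: a)
  case (Cons X Xs)
  then obtain c where "c > a" "X = {a..<c}" "tiling c Xs b" by auto
  with Cons.IH[of c] tiling_length_le[of c Xs b] show ?case by auto
qed simp

lemma tiling_snoc: "tiling a (L @ [X]) b \<longleftrightarrow> (\<exists>c. tiling a L c \<and> c < b \<and> X = {c..<b})"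
  by (induction L arbitrary: a) auto

lemma tiling_disjoint: "tiling a L b \<Longrightarrow> i < j \<Longrightarrow> j < length L \<Longrightarrow> L ! i \<inter> L ! j = {}"
proof (induction L arbitrary: a i j)
  case (Cons X Xs)
  then obtain c where c: "X = {a..<c}" "tiling c Xs b" by auto
  show ?case
  proof (cases i)
    case 0
    then obtain j' where j: "j = Suc j'" "j' < length Xs" using Cons.prems by (cases j) auto
    then have "Xs ! j' \<subseteq> {c..<b}" using tiling_Union[OF c(2)] nth_mem by blast
    then show ?thesis using 0 j c by auto
  next
    case (Suc i')
    then obtain j' where "j = Suc j'" using Cons.prems by (cases j) auto
    then show ?thesis using Cons.IH[OF c(2), of i' j'] Cons.prems Suc by auto
  qed
qed simp

lemma ct_verts_Node_copy: "None \<in> set es \<Longrightarrow> ct_verts (Node r es) = \<Union> (set (map (entry_set r) es))"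
  by (auto simp: entry_set_def split: option.splits)

lemma copy_marker_in_set: "length (filter (\<lambda>x. x = None) es) = 1 \<Longrightarrow> None \<in> set es"
  by (metis (mono_tags) filter_False length_0_conv zero_neq_one)

lemma ordered_Node_of_tiling:
  assumes tile: "tiling i (map (entry_set r) es) a" and i_a: "i < a"
    and marker: "length (filter (\<lambda>x. x = None) es) = 1" and has_tree: "\<exists>t. Some t \<in> set es"
    and sub: "\<And>t. Some t \<in> set es \<Longrightarrow> ct_wf t \<and> strongly_ordered t"
  shows "ct_verts (Node r es) = {i..<a} \<and> ct_wf (Node r es) \<and> strongly_ordered (Node r es)"
proof -
  have verts: "ct_verts (Node r es) = {i..<a}"
    using ct_verts_Node_copy[OF copy_marker_in_set[OF marker]] tiling_Union[OF tile] by simp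
  have "Min {i..<a} = i" using i_a by (intro Min_eqI) auto
  then have "consec_intervals (Min (ct_verts (Node r es))) (map (entry_set r) es)"
    using tiling_consec_intervals[OF tile] verts by simp
  moreover have "\<forall>x\<in>set es. case x of None \<Rightarrow> True | Some t \<Rightarrow> ct_wf t \<and> strongly_ordered t"
    using sub by (auto split: option.splits)
  moreover have "\<forall>k j. k < j \<and> j < length es \<longrightarrow> entry_set r (es ! k) \<inter> entry_set r (es ! j) = {}"
    using tiling_disjoint[OF tile] by fastforce
  ultimately show ?thesis
    using verts marker has_tree by (auto split: option.splits)
qed

lemma tiling_of_ordered_Node:
  assumes wf: "ct_wf (Node r es)" and so: "strongly_ordered (Node r es)"
    and verts: "ct_verts (Node r es) = {i..<a}" and i_a: "i < a" and es: "es \<noteq> []"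
  shows "tiling i (map (entry_set r) es) a" and "Suc i < a"
proof -
  have marker: "length (filter (\<lambda>x. x = None) es) = 1" and "\<exists>x\<in>set es. x \<noteq> None"
    using wf es by auto
  then obtain t where t: "Some t \<in> set es" by auto
  have "Min {i..<a} = i" using i_a by (intro Min_eqI) auto
  then have "consec_intervals i (map (entry_set r) es)" using so verts by simp
  then obtain b where b: "tiling i (map (entry_set r) es) b"
    using consec_intervals_tiling by blast
  have "\<Union> (set (map (entry_set r) es)) = {i..<a}"
    using ct_verts_Node_copy[OF copy_marker_in_set[OF marker], of r] verts by simp
  then have "{i..<b} = {i..<a}" using tiling_Union[OF b] by simp
  then show tile: "tiling i (map (entry_set r) es) a"
    using b i_a by (metis atLeastLessThan_empty_iff2 atLeastLessThan_inj(2) order.asym)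
  have "card {None, Some t} \<le> card (set es)"
    using copy_marker_in_set[OF marker] t by (intro card_mono) auto
  then have "2 \<le> length es" using card_length[of es] by simp
  then show "Suc i < a" using tiling_length_le[OF tile] by simp
qed

lemma ct_edges_source:
  "ct_wf T \<Longrightarrow> (x, y) \<in> ct_edges T \<Longrightarrow> x \<in> ct_verts T \<and> x \<noteq> ct_root T"
proof (induction T arbitrary: x y)
  case (Node r es)
  from Node.prems(2) obtain t where t: "Some t \<in> set es"
    and xy: "(x, y) = (ct_root t, r) \<or> (x, y) \<in> ct_edges t"
    by (auto split: option.splits)
  have "ct_wf t" using Node.prems(1) t by force
  then have x_t: "x \<in> ct_verts t"
    using xy Node.IH[OF t] by (cases t) auto
  have "length (filter (\<lambda>x. x = None) es) = 1" using Node.prems(1) t by auto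
  then obtain j where j: "j < length es" "es ! j = None"
    by (metis copy_marker_in_set in_set_conv_nth)
  obtain k where k: "k < length es" "es ! k = Some t" using t by (metis in_set_conv_nth)
  have disjoint: "entry_set r (es ! k') \<inter> entry_set r (es ! j') = {}" if "k' < j'"
    "j' < length es" for k' j'
    using Node.prems(1) that by simp
  have "j \<noteq> k" using j k by auto
  then have "entry_set r (es ! j) \<inter> entry_set r (es ! k) = {}"
    using disjoint[of j k] disjoint[of k j] j(1) k(1) by (cases "j < k") (auto simp: Int_commute)
  then have "r \<notin> ct_verts t" using j k by (simp add: entry_set_def)
  then show ?case using x_t t by force
qed

section \<open>The dynamic program\<close>

definition argmin_step :: "('a \<Rightarrow> 'b::linorder) \<Rightarrow> 'b \<times> 'a \<Rightarrow> 'a \<Rightarrow> 'b \<times> 'a" where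
  "argmin_step f vk b = (if f b < fst vk then (f b, b) else vk)"

lemma foldl_argmin_step:
  assumes "v = f k"
  shows "fst (foldl (argmin_step f) (v, k) xs) = f (snd (foldl (argmin_step f) (v, k) xs))
       \<and> snd (foldl (argmin_step f) (v, k) xs) \<in> insert k (set xs)
       \<and> (\<forall>b \<in> insert k (set xs). fst (foldl (argmin_step f) (v, k) xs) \<le> f b)"
  using assms
proof (induction xs arbitrary: v k)
  case Nil then show ?case by simp
next
  case (Cons x xs)
  show ?case
  proof (cases "f x < v")
    case True
    then have "foldl (argmin_step f) (v, k) (x # xs) = foldl (argmin_step f) (f x, x) xs"
      by (simp add: argmin_step_def)
    with Cons.IH[of "f x" x] True Cons.prems show ?thesis by auto
  next
    case False
    then have "foldl (argmin_step f) (v, k) (x # xs) = foldl (argmin_step f) (v, k) xs"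
      by (simp add: argmin_step_def)
    with Cons.IH[of v k] False Cons.prems show ?thesis by force
  qed
qed

text \<open>For an interval \<open>[i, a)\<close>, \<open>opt_tree i a\<close> is the least cost of an ordered tree
  on it; \<open>opt_rooted i a\<close> the least cost of an entry list tiling it that contains the
  copy marker, and \<open>opt_unrooted i a\<close> of one that does not. The second components
  record where the last entry starts (the value \<open>a\<close> marking a final copy marker),
  from which an optimal tree is read off.\<close>

locale ordered_tree_dp =
  fixes m :: "nat \<Rightarrow> real" and \<alpha> \<beta> \<gamma> :: real
begin

definition S :: "nat \<Rightarrow> real" where "S a = sum m {0..<a}"

lemma S_0: "S 0 = 0" by (simp add: S_def)

lemma S_Suc: "S (Suc j) = S j + m j" by (simp add: S_def)

lemma Size_atLeastLessThan: "c \<le> e \<Longrightarrow> Size m {c..<e} = S e - S c"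
  unfolding Size_def S_def using sum.atLeastLessThan_concat[of 0 c e m] by simp

function opt_rooted :: "nat \<Rightarrow> nat \<Rightarrow> real \<times> nat"
  and opt_tree :: "nat \<Rightarrow> nat \<Rightarrow> real"
  and opt_unrooted :: "nat \<Rightarrow> nat \<Rightarrow> real \<times> nat" where
  "opt_rooted i a =
     (if a \<le> i then (0, a) else
      foldl (\<lambda>vk b. if max (fst (opt_rooted i b)) (opt_tree b a) + \<alpha> + \<beta> * (S a - S b) < fst vk
                     then (max (fst (opt_rooted i b)) (opt_tree b a) + \<alpha> + \<beta> * (S a - S b), b) else vk)
        (fst (opt_unrooted i (a - 1)) + \<gamma> * m (a - 1), a) [Suc i..<a])"
| "opt_tree i a = (if a \<le> Suc i then 0 else fst (opt_rooted i a))"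
| "opt_unrooted i a =
     (if a \<le> i then (0, i) else
      foldl (\<lambda>vk b. if max (fst (opt_unrooted i b)) (opt_tree b a) + \<alpha> + \<beta> * (S a - S b) < fst vk
                     then (max (fst (opt_unrooted i b)) (opt_tree b a) + \<alpha>
                       + \<beta> * (S a - S b), b) else vk)
        (max (fst (opt_unrooted i i)) (opt_tree i a) + \<alpha> + \<beta> * (S a - S i), i) [Suc i..<a])"
  by pat_completeness auto
termination
  by (relation "measure (\<lambda>x. case x of Inl (i, a) \<Rightarrow> 3 * (a - i)
      | Inr (Inl (i, a)) \<Rightarrow> 3 * (a - i) + 1 | Inr (Inr (i, a)) \<Rightarrow> 3 * (a - i) + 2)") auto

declare opt_rooted.simps[simp del] opt_unrooted.simps[simp del]

definition cand_rooted :: "nat \<Rightarrow> nat \<Rightarrow> nat \<Rightarrow> real" where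
  "cand_rooted i a b = (if b = a then fst (opt_unrooted i (a - 1)) + \<gamma> * m (a - 1)
     else max (fst (opt_rooted i b)) (opt_tree b a) + \<alpha> + \<beta> * (S a - S b))"

definition cand_unrooted :: "nat \<Rightarrow> nat \<Rightarrow> nat \<Rightarrow> real" where
  "cand_unrooted i a b = max (fst (opt_unrooted i b)) (opt_tree b a) + \<alpha> + \<beta> * (S a - S b)"

lemma opt_rooted_eq:
  "i < a \<Longrightarrow> opt_rooted i a = foldl (argmin_step (cand_rooted i a)) (cand_rooted i a a, a) [Suc i..<a]"
  by (subst opt_rooted.simps) (auto simp: cand_rooted_def argmin_step_def intro!: foldl_cong)

lemma opt_unrooted_eq:
  "i < a \<Longrightarrow> opt_unrooted i a
    = foldl (argmin_step (cand_unrooted i a)) (cand_unrooted i a i, i) [Suc i..<a]"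
  by (subst opt_unrooted.simps) (auto simp: cand_unrooted_def argmin_step_def intro!: foldl_cong)

lemma opt_unrooted_empty: "a \<le> i \<Longrightarrow> opt_unrooted i a = (0, i)"
  by (subst opt_unrooted.simps) simp

lemma opt_rooted_argmin:
  assumes "i < a"
  shows "(snd (opt_rooted i a) = a \<or> (i < snd (opt_rooted i a) \<and> snd (opt_rooted i a) < a))
    \<and> fst (opt_rooted i a) = cand_rooted i a (snd (opt_rooted i a))
    \<and> (\<forall>b. (b = a \<or> (i < b \<and> b < a)) \<longrightarrow> fst (opt_rooted i a) \<le> cand_rooted i a b)"
proof -
  have "insert a (set [Suc i..<a]) = {b. b = a \<or> (i < b \<and> b < a)}" by auto
  then show ?thesis
    using foldl_argmin_step[of "cand_rooted i a a" "cand_rooted i a" a "[Suc i..<a]"]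
    unfolding opt_rooted_eq[OF assms, symmetric] by auto
qed

lemma opt_unrooted_argmin:
  assumes "i < a"
  shows "(i \<le> snd (opt_unrooted i a) \<and> snd (opt_unrooted i a) < a)
    \<and> fst (opt_unrooted i a) = cand_unrooted i a (snd (opt_unrooted i a))
    \<and> (\<forall>b. i \<le> b \<and> b < a \<longrightarrow> fst (opt_unrooted i a) \<le> cand_unrooted i a b)"
proof -
  have "insert i (set [Suc i..<a]) = {i..<a}" using assms by auto
  then show ?thesis
    using foldl_argmin_step[of "cand_unrooted i a i" "cand_unrooted i a" i "[Suc i..<a]"]
    unfolding opt_unrooted_eq[OF assms, symmetric] by auto
qed

section \<open>An optimal ordered tree read off the tables\<close>

fun dp_root :: "nat \<Rightarrow> nat \<Rightarrow> nat" where
  "dp_root i a = (if a \<le> i then i else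
     if i < snd (opt_rooted i a) \<and> snd (opt_rooted i a) < a then dp_root i (snd (opt_rooted i a))
     else a - 1)"

declare dp_root.simps[simp del]

function dp_tree :: "nat \<Rightarrow> nat \<Rightarrow> ctree"
  and rooted_entries :: "nat \<Rightarrow> nat \<Rightarrow> ctree option list"
  and unrooted_entries :: "nat \<Rightarrow> nat \<Rightarrow> ctree option list" where
  "dp_tree i a = (if a \<le> Suc i then Node i [] else Node (dp_root i a) (rooted_entries i a))"
| "rooted_entries i a = (if a \<le> i then [] else
     if i < snd (opt_rooted i a) \<and> snd (opt_rooted i a) < a
     then rooted_entries i (snd (opt_rooted i a)) @ [Some (dp_tree (snd (opt_rooted i a)) a)]
     else unrooted_entries i (a - 1) @ [None])"
| "unrooted_entries i a = (if a \<le> i then [] else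
     if i \<le> snd (opt_unrooted i a) \<and> snd (opt_unrooted i a) < a
     then unrooted_entries i (snd (opt_unrooted i a)) @ [Some (dp_tree (snd (opt_unrooted i a)) a)]
     else [])"
  by pat_completeness auto
termination
  by (relation "measure (\<lambda>x. case x of Inl (i, a) \<Rightarrow> 3 * (a - i) + 1
      | Inr (Inl (i, a)) \<Rightarrow> 3 * (a - i) | Inr (Inr (i, a)) \<Rightarrow> 3 * (a - i) + 2)") auto

declare dp_tree.simps[simp del] rooted_entries.simps[simp del] unrooted_entries.simps[simp del]

lemma rooted_entries_split:
  "i < snd (opt_rooted i a) \<Longrightarrow> snd (opt_rooted i a) < a \<Longrightarrow>
   rooted_entries i a
     = rooted_entries i (snd (opt_rooted i a)) @ [Some (dp_tree (snd (opt_rooted i a)) a)]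
   \<and> dp_root i a = dp_root i (snd (opt_rooted i a))"
  by (simp add: rooted_entries.simps[of i a] dp_root.simps[of i a])

lemma rooted_entries_copy:
  "i < a \<Longrightarrow> snd (opt_rooted i a) = a \<Longrightarrow>
   rooted_entries i a = unrooted_entries i (a - 1) @ [None] \<and> dp_root i a = a - 1"
  by (simp add: rooted_entries.simps[of i a] dp_root.simps[of i a])

lemma unrooted_entries_split:
  "i < a \<Longrightarrow> unrooted_entries i a
     = unrooted_entries i (snd (opt_unrooted i a)) @ [Some (dp_tree (snd (opt_unrooted i a)) a)]"
  using opt_unrooted_argmin[of i a] by (simp add: unrooted_entries.simps[of i a])

lemma dp_tree_Node: "Suc i < a \<Longrightarrow> dp_tree i a = Node (dp_root i a) (rooted_entries i a)"
  by (simp add: dp_tree.simps[of i a])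

lemma dp_tree_root: "ct_root (dp_tree i a) = (if a \<le> Suc i then i else dp_root i a)"
  by (simp add: dp_tree.simps[of i a])

lemma dp_tree_child_edges:
  assumes "Suc i < a" and "Some t \<in> set (rooted_entries i a)"
  shows "(ct_root t, dp_root i a) \<in> ct_edges (dp_tree i a) \<and> ct_edges t \<subseteq> ct_edges (dp_tree i a)"
  using assms by (auto simp: dp_tree_Node intro!: bexI[of _ "Some t"])

definition entry_step :: "nat \<Rightarrow> real \<Rightarrow> ctree option \<Rightarrow> real" where
  "entry_step r c x = (case x of None \<Rightarrow> c + \<gamma> * m r
     | Some t \<Rightarrow> max c (ct_cost m \<alpha> \<beta> \<gamma> t) + \<alpha> + \<beta> * Size m (ct_verts t))"

lemma entry_step_None [simp]: "entry_step r c None = c + \<gamma> * m r"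
  by (simp add: entry_step_def)

lemma ct_cost_Node_foldl: "ct_cost m \<alpha> \<beta> \<gamma> (Node r es) = foldl (entry_step r) 0 es"
  unfolding entry_step_def by simp

lemma entries_cost_snoc_tree:
  "ct_verts t = {b..<a} \<Longrightarrow> b \<le> a \<Longrightarrow> foldl (entry_step r) 0 (es @ [Some t])
     = max (foldl (entry_step r) 0 es) (ct_cost m \<alpha> \<beta> \<gamma> t) + \<alpha> + \<beta> * (S a - S b)"
  by (simp add: entry_step_def Size_atLeastLessThan)

definition tree_attains :: "nat \<Rightarrow> nat \<Rightarrow> ctree \<Rightarrow> bool" where
  "tree_attains i a T \<longleftrightarrow> ct_verts T = {i..<a} \<and> ct_wf T \<and> strongly_ordered T
     \<and> ct_cost m \<alpha> \<beta> \<gamma> T \<le> opt_tree i a"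

definition rooted_attains :: "nat \<Rightarrow> nat \<Rightarrow> nat \<Rightarrow> ctree option list \<Rightarrow> bool" where
  "rooted_attains i a r es \<longleftrightarrow> tiling i (map (entry_set r) es) a
     \<and> length (filter (\<lambda>x. x = None) es) = 1
     \<and> (\<forall>t. Some t \<in> set es \<longrightarrow> ct_wf t \<and> strongly_ordered t)
     \<and> foldl (entry_step r) 0 es \<le> fst (opt_rooted i a)
     \<and> (Suc i < a \<longrightarrow> (\<exists>t. Some t \<in> set es))"

definition unrooted_attains :: "nat \<Rightarrow> nat \<Rightarrow> ctree option list \<Rightarrow> bool" where
  "unrooted_attains i a es \<longleftrightarrow> None \<notin> set es
     \<and> (\<forall>t. Some t \<in> set es \<longrightarrow> ct_wf t \<and> strongly_ordered t)
     \<and> (\<forall>r. tiling i (map (entry_set r) es) a \<and> foldl (entry_step r) 0 es \<le> fst (opt_unrooted i a))"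

lemma tree_attains_Node:
  assumes "rooted_attains i a r es" and "Suc i < a"
  shows "tree_attains i a (Node r es)"
proof -
  have "ct_verts (Node r es) = {i..<a} \<and> ct_wf (Node r es) \<and> strongly_ordered (Node r es)"
    using assms by (intro ordered_Node_of_tiling) (auto simp: rooted_attains_def)
  moreover have "ct_cost m \<alpha> \<beta> \<gamma> (Node r es) \<le> opt_tree i a"
    using assms unfolding rooted_attains_def ct_cost_Node_foldl by simp
  ultimately show ?thesis unfolding tree_attains_def by blast
qed

lemma rooted_attains_snoc_tree:
  assumes es: "rooted_attains i b r es" and t: "tree_attains b a t" and "i < b" "b < a"
    and opt: "fst (opt_rooted i a) = cand_rooted i a b"
  shows "rooted_attains i a r (es @ [Some t])"
proof -
  have "foldl (entry_step r) 0 (es @ [Some t])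
      = max (foldl (entry_step r) 0 es) (ct_cost m \<alpha> \<beta> \<gamma> t) + \<alpha> + \<beta> * (S a - S b)"
    using t \<open>b < a\<close> by (intro entries_cost_snoc_tree) (auto simp: tree_attains_def)
  also have "\<dots> \<le> cand_rooted i a b"
  proof -
    have "foldl (entry_step r) 0 es \<le> fst (opt_rooted i b)" "ct_cost m \<alpha> \<beta> \<gamma> t \<le> opt_tree b a"
      using es t unfolding rooted_attains_def tree_attains_def by auto
    moreover have "cand_rooted i a b = max (fst (opt_rooted i b)) (opt_tree b a) + \<alpha> + \<beta> * (S a - S b)"
      using \<open>b < a\<close> unfolding cand_rooted_def by simp
    ultimately show ?thesis using max.mono by (metis add_right_mono)
  qed
  finally show ?thesis
    using es t \<open>b < a\<close> opt unfolding rooted_attains_def tree_attains_def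
    by (auto simp: tiling_snoc entry_set_def)
qed

lemma rooted_attains_snoc_copy:
  assumes es: "unrooted_attains i (a - 1) es" and "i < a"
    and opt: "fst (opt_rooted i a) = cand_rooted i a a"
  shows "rooted_attains i a (a - 1) (es @ [None])"
proof -
  have tile: "tiling i (map (entry_set (a - 1)) es) (a - 1)" and no_copy: "None \<notin> set es"
    using es unfolding unrooted_attains_def by auto
  have "\<exists>t. Some t \<in> set es" if "Suc i < a"
  proof -
    have "es \<noteq> []" using tile that by auto
    then obtain x where x: "x \<in> set es" by (meson last_in_set)
    moreover have "x \<noteq> None" using no_copy x by metis
    ultimately show ?thesis by blast
  qed
  moreover have "filter (\<lambda>x. x = None) es = []"
    using no_copy by (metis (mono_tags) filter_False)
  moreover have "tiling i (map (entry_set (a - 1)) (es @ [None])) a"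
    using tile \<open>i < a\<close> unfolding map_append list.map tiling_snoc
    by (intro exI[of _ "a - 1"]) (auto simp: entry_set_def)
  moreover have "foldl (entry_step (a - 1)) 0 (es @ [None]) \<le> fst (opt_rooted i a)"
    using es opt unfolding unrooted_attains_def by (simp add: cand_rooted_def)
  ultimately show ?thesis
    using es unfolding rooted_attains_def unrooted_attains_def by auto
qed

lemma unrooted_attains_Nil: "unrooted_attains i i []"
  by (simp add: unrooted_attains_def opt_unrooted_empty)

lemma unrooted_attains_snoc_tree:
  assumes es: "unrooted_attains i b es" and t: "tree_attains b a t" and "b < a"
    and opt: "fst (opt_unrooted i a) = cand_unrooted i a b"
  shows "unrooted_attains i a (es @ [Some t])"
proof -
  have "foldl (entry_step r) 0 (es @ [Some t]) \<le> fst (opt_unrooted i a)" for r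
  proof -
    have "foldl (entry_step r) 0 (es @ [Some t])
        = max (foldl (entry_step r) 0 es) (ct_cost m \<alpha> \<beta> \<gamma> t) + \<alpha> + \<beta> * (S a - S b)"
      using t \<open>b < a\<close> by (intro entries_cost_snoc_tree) (auto simp: tree_attains_def)
    also have "\<dots> \<le> cand_unrooted i a b"
    proof -
      have "foldl (entry_step r) 0 es \<le> fst (opt_unrooted i b)" "ct_cost m \<alpha> \<beta> \<gamma> t \<le> opt_tree b a"
        using es t unfolding unrooted_attains_def tree_attains_def by auto
      then show ?thesis unfolding cand_unrooted_def using max.mono by (metis add_right_mono)
    qed
    finally show ?thesis using opt by simp
  qed
  then show ?thesis
    using es t \<open>b < a\<close> unfolding unrooted_attains_def tree_attains_def
    by (auto simp: tiling_snoc entry_set_def)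
qed

lemma dp_tree_attains:
  "i < a \<Longrightarrow> tree_attains i a (dp_tree i a)"
  "i < a \<Longrightarrow> rooted_attains i a (dp_root i a) (rooted_entries i a)"
  "i \<le> a \<Longrightarrow> unrooted_attains i a (unrooted_entries i a)"
proof (induction i a and i a and i a rule: dp_tree_rooted_entries_unrooted_entries.induct)
  case (1 i a)
  show ?case
  proof (cases "a \<le> Suc i")
    case True
    then have "a = Suc i" using "1.prems" by simp
    then show ?thesis by (simp add: dp_tree.simps[of i "Suc i"] tree_attains_def)
  next
    case False
    then show ?thesis using 1 tree_attains_Node by (simp add: dp_tree_Node)
  qed
next
  case (2 i a)
  define b where "b = snd (opt_rooted i a)"
  have argmin: "b = a \<or> (i < b \<and> b < a)" "fst (opt_rooted i a) = cand_rooted i a b"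
    using opt_rooted_argmin[OF "2.prems"] unfolding b_def by auto
  show ?case
  proof (cases "i < b \<and> b < a")
    case True
    then have "rooted_attains i b (dp_root i b) (rooted_entries i b)" "tree_attains b a (dp_tree b a)"
      using 2 unfolding b_def by auto
    then show ?thesis
      using rooted_attains_snoc_tree[OF _ _ _ _ argmin(2)] rooted_entries_split[of i a] True
      unfolding b_def by auto
  next
    case False
    then have "b = a" using argmin(1) by auto
    moreover have "unrooted_attains i (a - 1) (unrooted_entries i (a - 1))"
      using 2 False unfolding b_def by auto
    ultimately show ?thesis
      using rooted_attains_snoc_copy[OF _ "2.prems"] argmin(2) rooted_entries_copy[OF "2.prems"]
      unfolding b_def by auto
  qed
next
  case (3 i a)
  show ?case
  proof (cases "a \<le> i")
    case True
    then have "a = i" using "3.prems" by simp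
    then show ?thesis by (simp add: unrooted_entries.simps[of i i] unrooted_attains_Nil)
  next
    case False
    define b where "b = snd (opt_unrooted i a)"
    have argmin: "i \<le> b" "b < a" "fst (opt_unrooted i a) = cand_unrooted i a b"
      using opt_unrooted_argmin[of i a] False unfolding b_def by auto
    then have "unrooted_attains i b (unrooted_entries i b)" "tree_attains b a (dp_tree b a)"
      using 3 False unfolding b_def by auto
    then show ?thesis
      using unrooted_attains_snoc_tree[OF _ _ argmin(2,3)] unrooted_entries_split[of i a] False
      unfolding b_def by auto
  qed
qed

lemma entries_cost_lower_bound:
  assumes "tiling i (map (entry_set r) es) e" and "length (filter (\<lambda>x. x = None) es) \<le> 1"
    and "\<And>t b c. Some t \<in> set es \<Longrightarrow> ct_verts t = {b..<c} \<Longrightarrow> b < c \<Longrightarrow> opt_tree b c \<le> ct_cost m \<alpha> \<beta> \<gamma> t"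
  shows "(None \<notin> set es \<longrightarrow> fst (opt_unrooted i e) \<le> foldl (entry_step r) 0 es)
    \<and> (None \<in> set es \<longrightarrow> i < e \<and> fst (opt_rooted i e) \<le> foldl (entry_step r) 0 es)"
  using assms
proof (induction es arbitrary: e rule: rev_induct)
  case Nil
  then show ?case by (simp add: opt_unrooted_empty)
next
  case (snoc x xs)
  from snoc.prems(1) obtain c where c: "tiling i (map (entry_set r) xs) c" "c < e" "entry_set r x
    = {c..<e}"
    by (auto simp: tiling_snoc)
  have i_c: "i \<le> c" using tiling_length_le[OF c(1)] by simp
  have IH: "(None \<notin> set xs \<longrightarrow> fst (opt_unrooted i c) \<le> foldl (entry_step r) 0 xs)
      \<and> (None \<in> set xs \<longrightarrow> i < c \<and> fst (opt_rooted i c) \<le> foldl (entry_step r) 0 xs)"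
    using snoc.IH[OF c(1)] snoc.prems(2,3) by auto
  show ?case
  proof (cases x)
    case None
    then have r: "r = c" "e = Suc c" using c(3)
      by (simp_all add: entry_set_def singleton_eq_atLeastLessThan)
    have "None \<notin> set xs"
      using snoc.prems(2) None by (auto simp: filter_empty_conv)
    moreover have "fst (opt_rooted i e) \<le> cand_rooted i e e" using opt_rooted_argmin[of i e] r i_c
      by auto
    ultimately show ?thesis using None IH r i_c by (simp add: cand_rooted_def)
  next
    case (Some t)
    have t: "ct_verts t = {c..<e}" using c(3) Some by (simp add: entry_set_def)
    have sub: "opt_tree c e \<le> ct_cost m \<alpha> \<beta> \<gamma> t" using snoc.prems(3) Some t c(2) by auto
    have snoc_cost: "foldl (entry_step r) 0 (xs @ [x])
        = max (foldl (entry_step r) 0 xs) (ct_cost m \<alpha> \<beta> \<gamma> t) + \<alpha> + \<beta> * (S e - S c)"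
      by (simp only: Some entries_cost_snoc_tree[OF t less_imp_le[OF c(2)]])
    have bound: "max y (opt_tree c e) + \<alpha> + \<beta> * (S e - S c) \<le> foldl (entry_step r) 0 (xs @ [x])"
      if "y \<le> foldl (entry_step r) 0 xs" for y
      unfolding snoc_cost using max.mono[OF that sub] by linarith
    show ?thesis
    proof (cases "None \<in> set xs")
      case False
      have "fst (opt_unrooted i e) \<le> cand_unrooted i e c"
        using opt_unrooted_argmin[of i e] i_c c(2) by auto
      then show ?thesis using bound IH False Some unfolding cand_unrooted_def by force
    next
      case True
      then have "i < c" using IH by simp
      then have "fst (opt_rooted i e) \<le> cand_rooted i e c" using opt_rooted_argmin[of i e] c(2) by auto
      then show ?thesis using bound IH True Some c(2) \<open>i < c\<close> unfolding cand_rooted_def by force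
    qed
  qed
qed

lemma opt_tree_le_ct_cost:
  "ct_wf T \<Longrightarrow> strongly_ordered T \<Longrightarrow> ct_verts T = {i..<a} \<Longrightarrow> i < a \<Longrightarrow>
   opt_tree i a \<le> ct_cost m \<alpha> \<beta> \<gamma> T"
proof (induction T arbitrary: i a)
  case (Node r es)
  show ?case
  proof (cases "es = []")
    case True
    then show ?thesis using Node.prems(3) by (simp add: singleton_eq_atLeastLessThan)
  next
    case False
    note tile = tiling_of_ordered_Node[OF Node.prems False]
    have "length (filter (\<lambda>x. x = None) es) = 1" using Node.prems(1) False by simp
    moreover have "opt_tree b c \<le> ct_cost m \<alpha> \<beta> \<gamma> t"
      if "Some t \<in> set es" "ct_verts t = {b..<c}" "b < c" for t b c
      using Node.IH[OF that(1) _ _ _ that(2,3)] Node.prems(1,2) that(1) by force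
    ultimately have "fst (opt_rooted i a) \<le> foldl (entry_step r) 0 es"
      using entries_cost_lower_bound[OF tile(1)] copy_marker_in_set by auto
    then show ?thesis using tile(2) unfolding ct_cost_Node_foldl by simp
  qed
qed

lemma dp_tree_optimal:
  assumes "0 < p"
  shows "is_ctree {0..<p} (dp_tree 0 p) \<and> strongly_ordered (dp_tree 0 p)
    \<and> (\<forall>T'. is_ctree {0..<p} T' \<and> strongly_ordered T' \<longrightarrow>
          ct_cost m \<alpha> \<beta> \<gamma> (dp_tree 0 p) \<le> ct_cost m \<alpha> \<beta> \<gamma> T')"
  using dp_tree_attains(1)[of 0 p] opt_tree_le_ct_cost[of _ 0 p] assms
  unfolding is_ctree_def tree_attains_def by (meson order_trans)

end

section \<open>Running programs within a step bound\<close>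

definition runs :: "com \<Rightarrow> state \<Rightarrow> (state \<Rightarrow> bool) \<Rightarrow> nat \<Rightarrow> bool" where
  "runs c s Q n \<longleftrightarrow> (\<exists>t s'. exec c s t s' \<and> t \<le> n \<and> Q s')"

lemma runs_mono: "runs c s Q n \<Longrightarrow> (\<And>s. Q s \<Longrightarrow> Q' s) \<Longrightarrow> n \<le> n' \<Longrightarrow> runs c s Q' n'"
  unfolding runs_def by force

lemma runs_Seq: "runs c1 s (\<lambda>s1. runs c2 s1 Q n2) n1 \<Longrightarrow> runs (Seq c1 c2) s Q (n1 + n2)"
  unfolding runs_def by (force intro: exec.Seq)

lemma runs_If: "(bval b s \<Longrightarrow> runs c1 s Q n) \<Longrightarrow> (\<not> bval b s \<Longrightarrow> runs c2 s Q n) \<Longrightarrow>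
   runs (If b c1 c2) s Q (1 + bcost b + n)"
  unfolding runs_def by (cases "bval b s") (force intro: exec.IfT exec.IfF)+

lemma runs_While:
  assumes step: "\<And>k s. I k s \<Longrightarrow> bval b s \<Longrightarrow> 0 < k \<and> runs c s (I (k - 1)) n"
  shows "I k s \<Longrightarrow> runs (While b c) s (\<lambda>s'. \<exists>j. I j s' \<and> \<not> bval b s') (k * (n + 1 + bcost b) + 1
    + bcost b)"
proof (induction k arbitrary: s)
  case 0
  then have "\<not> bval b s" using step by blast
  then show ?case using 0 unfolding runs_def by (force intro: exec.WhileF)
next
  case (Suc k)
  show ?case
  proof (cases "bval b s")
    case False
    then show ?thesis using Suc.prems unfolding runs_def by (force intro: exec.WhileF)
  next
    case True
    then have "runs c s (I k) n" using step[OF Suc.prems] by simp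
    then obtain t1 s1 where 1: "exec c s t1 s1" "t1 \<le> n" "I k s1" unfolding runs_def by blast
    from Suc.IH[OF 1(3)] obtain t2 s2 where 2: "exec (While b c) s1 t2 s2"
      "t2 \<le> k * (n + 1 + bcost b) + 1 + bcost b" "\<exists>j. I j s2 \<and> \<not> bval b s2" unfolding runs_def by blast
    have "exec (While b c) s (1 + bcost b + t1 + t2) s2" by (rule exec.WhileT[OF True 1(1) 2(1)])
    moreover have "1 + bcost b + t1 + t2 \<le> Suc k * (n + 1 + bcost b) + 1 + bcost b" using 1(2) 2(2)
      by simp
    ultimately show ?thesis using 2(3) unfolding runs_def by blast
  qed
qed

fun loop_free :: "com \<Rightarrow> bool" where
  "loop_free (While b c) = False"
| "loop_free (Seq c1 c2) = (loop_free c1 \<and> loop_free c2)"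
| "loop_free (If b c1 c2) = (loop_free c1 \<and> loop_free c2)"
| "loop_free _ = True"

fun lf_exec :: "com \<Rightarrow> state \<Rightarrow> state" where
  "lf_exec SKIP s = s"
| "lf_exec (IStore a b e) s = s\<lparr>imem := (imem s)((ival a s, ival b s) := ival e s),
        iused := insert (ival a s, ival b s) (iused s)\<rparr>"
| "lf_exec (RStore a b e) s = s\<lparr>rmem := (rmem s)((ival a s, ival b s) := rval e s),
        rused := insert (ival a s, ival b s) (rused s)\<rparr>"
| "lf_exec (Seq c1 c2) s = lf_exec c2 (lf_exec c1 s)"
| "lf_exec (If b c1 c2) s = (if bval b s then lf_exec c1 s else lf_exec c2 s)"
| "lf_exec (While b c) s = s"

fun lf_steps :: "com \<Rightarrow> nat" where
  "lf_steps SKIP = 1"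
| "lf_steps (IStore a b e) = 1 + icost a + icost b + icost e"
| "lf_steps (RStore a b e) = 1 + icost a + icost b + rcost e"
| "lf_steps (Seq c1 c2) = lf_steps c1 + lf_steps c2"
| "lf_steps (If b c1 c2) = 1 + bcost b + max (lf_steps c1) (lf_steps c2)"
| "lf_steps (While b c) = 0"

lemma exec_loop_free: "loop_free c \<Longrightarrow> \<exists>t. exec c s t (lf_exec c s) \<and> t \<le> lf_steps c"
proof (induction c arbitrary: s)
  case SKIP then show ?case by (auto intro: exec.Skip)
next
  case (IStore a b e) then show ?case by (auto intro: exec.IStore)
next
  case (RStore a b e) then show ?case by (auto intro: exec.RStore)
next
  case (Seq c1 c2)
  then obtain t1 where 1: "exec c1 s t1 (lf_exec c1 s)" "t1 \<le> lf_steps c1" by auto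
  from Seq obtain t2 where 2: "exec c2 (lf_exec c1 s) t2 (lf_exec c2 (lf_exec c1 s))" "t2
    \<le> lf_steps c2" by fastforce
  show ?case using exec.Seq[OF 1(1) 2(1)] 1(2) 2(2) by force
next
  case (If b c1 c2)
  show ?case
  proof (cases "bval b s")
    case True
    with If obtain t where "exec c1 s t (lf_exec c1 s)" "t \<le> lf_steps c1" by auto
    then show ?thesis using True by (force intro: exec.IfT)
  next
    case False
    with If obtain t where "exec c2 s t (lf_exec c2 s)" "t \<le> lf_steps c2" by auto
    then show ?thesis using False by (force intro: exec.IfF)
  qed
qed simp

lemma runs_loop_free: "loop_free c \<Longrightarrow> Q (lf_exec c s) \<Longrightarrow> lf_steps c \<le> n \<Longrightarrow> runs c s Q n"
  unfolding runs_def using exec_loop_free[of c s] by force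

lemma runs_SeqI: "runs c1 s R n1 \<Longrightarrow> (\<And>s1. R s1 \<Longrightarrow> runs c2 s1 Q n2) \<Longrightarrow> runs (Seq c1 c2) s Q (n1 + n2)"
  by (rule runs_Seq) (erule runs_mono, auto)

lemma runs_WhileI:
  assumes step: "\<And>k s. I k s \<Longrightarrow> bval b s \<Longrightarrow> 0 < k \<and> runs c s (I (k - 1)) n"
    and I: "I k s" and K: "k \<le> K" and Q: "\<And>j s. I j s \<Longrightarrow> \<not> bval b s \<Longrightarrow> Q s"
  shows "runs (While b c) s Q (K * (n + 1 + bcost b) + 1 + bcost b)"
proof -
  have A: "runs (While b c) s (\<lambda>s'. \<exists>j. I j s' \<and> \<not> bval b s') (k * (n + 1 + bcost b) + 1 + bcost b)"
    by (rule runs_While[OF step I])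
  have mono: "k * (n + 1 + bcost b) \<le> K * (n + 1 + bcost b)" using K by (rule mult_right_mono) simp
  show ?thesis by (rule runs_mono[OF A]) (use Q mono in auto)
qed

text \<open>Integer memory: cell \<open>(0,0)\<close> holds \<open>p\<close>, row 1 the parent map being output, row 2
  the integer registers. Real memory: row 0 holds \<open>m\<close>, row 1 \<open>\<alpha>, \<beta>, \<gamma>\<close>, row 2 the prefix
  sums \<open>S 0, \<dots>, S p\<close>, row 3 the real registers. The tables live at offset 10 away from
  these rows (see \<open>unrooted_cell\<close>, \<open>rooted_cell\<close>, \<open>tree_cell\<close>), so that all addresses
  are computed by additions.\<close>

abbreviation p_val :: iexp where "p_val \<equiv> IL (IC 0) (IC 0)"
abbreviation ireg :: "int \<Rightarrow> iexp" where "ireg k \<equiv> IL (IC 2) (IC k)"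
abbreviation iset :: "int \<Rightarrow> iexp \<Rightarrow> com" where "iset k e \<equiv> IStore (IC 2) (IC k) e"
abbreviation rreg :: "int \<Rightarrow> rexp" where "rreg k \<equiv> RL (IC 3) (IC k)"
abbreviation rset :: "int \<Rightarrow> rexp \<Rightarrow> com" where "rset k e \<equiv> RStore (IC 3) (IC k) e"
abbreviation inc :: "iexp \<Rightarrow> iexp" where "inc e \<equiv> IAdd e (IC 1)"
abbreviation dec :: "iexp \<Rightarrow> iexp" where "dec e \<equiv> ISub e (IC 1)"
abbreviation pos :: "iexp \<Rightarrow> iexp" where "pos e \<equiv> IAdd (IC 10) e"
abbreviation neg :: "iexp \<Rightarrow> iexp" where "neg e \<equiv> ISub (IC (-10)) e"
abbreviation IEq :: "iexp \<Rightarrow> iexp \<Rightarrow> bexp" where "IEq x y \<equiv> BAnd (ILe x y) (ILe y x)"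

abbreviation prefix_guard :: bexp where "prefix_guard \<equiv> ILe (inc (ireg 11)) p_val"

definition prefix_sums_init :: com where
  "prefix_sums_init = Seq (RStore (IC 2) (IC 0) (RC 0)) (iset 11 (IC 0))"

definition prefix_sums_step :: com where
  "prefix_sums_step
    = Seq (RStore (IC 2) (inc (ireg 11)) (RAdd (RL (IC 2) (ireg 11)) (RL (IC 0) (ireg 11))))
     (iset 11 (inc (ireg 11)))"

definition prefix_sums_prog :: com where
  "prefix_sums_prog = Seq prefix_sums_init (While prefix_guard prefix_sums_step)"

locale dp_machine = ordered_tree_dp +
  fixes p :: nat
begin

definition input_stored :: "state \<Rightarrow> bool" where
  "input_stored s \<longleftrightarrow> imem s (0,0) = int p \<and> (\<forall>j<p. rmem s (0, int j) = m j)
     \<and> rmem s (1,0) = \<alpha> \<and> rmem s (1,1) = \<beta> \<and> rmem s (1,2) = \<gamma>"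

definition int_cells :: "(int \<times> int) set" where
  "int_cells = {(0,0)} \<union> ({1} \<times> {0..<int p}) \<union> ({2} \<times> {0..12})
     \<union> ({10..10 + int p} \<times> {10..10 + int p}) \<union> ({10..10 + int p} \<times> {-10 - int p..-10})
     \<union> ({-10 - int p..-10} \<times> {10..10 + int p})"
definition real_cells :: "(int \<times> int) set" where
  "real_cells = ({0} \<times> {0..<int p}) \<union> ({1} \<times> {0..2}) \<union> ({2} \<times> {0..int p}) \<union> ({3} \<times> {0..3})
     \<union> ({10..10 + int p} \<times> {10..10 + int p}) \<union> ({10..10 + int p} \<times> {-10 - int p..-10})
     \<union> ({-10 - int p..-10} \<times> {10..10 + int p})"

definition within_cells :: "state \<Rightarrow> bool" where
  "within_cells s \<longleftrightarrow> iused s \<subseteq> int_cells \<and> rused s \<subseteq> real_cells"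

definition prefix_sums_stored :: "state \<Rightarrow> nat \<Rightarrow> bool" where
  "prefix_sums_stored s k \<longleftrightarrow> (\<forall>j\<le>k. rmem s (2, int j) = S j)"

definition ready :: "state \<Rightarrow> bool" where
  "ready s \<longleftrightarrow> input_stored s \<and> within_cells s \<and> prefix_sums_stored s p"

definition prefix_inv :: "nat \<Rightarrow> state \<Rightarrow> bool" where
  "prefix_inv k s \<longleftrightarrow> input_stored s \<and> within_cells s
     \<and> (\<exists>j. imem s (2,11) = int j \<and> j \<le> p \<and> k = p - j \<and> prefix_sums_stored s j)"

lemma prefix_sums_loop:
  assumes I: "prefix_inv k s" and g: "bval prefix_guard s"
  shows "0 < k \<and> runs prefix_sums_step s (prefix_inv (k - 1)) (lf_steps prefix_sums_step)"
proof -
  obtain j where j: "imem s (2,11) = int j" "j \<le> p" "k = p - j" "prefix_sums_stored s j"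
    "input_stored s" "within_cells s"
    using I unfolding prefix_inv_def by blast
  have "j < p" using g j by (simp add: input_stored_def)
  let ?s' = "lf_exec prefix_sums_step s"
  have "input_stored ?s'" "within_cells ?s'" "imem ?s' (2,11) = int (Suc j)"
    using j \<open>j < p\<close> by (simp_all add: prefix_sums_step_def input_stored_def within_cells_def
        int_cells_def real_cells_def)
  moreover have "prefix_sums_stored ?s' (Suc j)"
    using j(1,4,5) \<open>j < p\<close>
    by (auto simp: prefix_sums_step_def prefix_sums_stored_def input_stored_def S_Suc le_Suc_eq)
  ultimately have "prefix_inv (k - 1) ?s'"
    unfolding prefix_inv_def using j(3) \<open>j < p\<close> by (intro conjI exI[of _ "Suc j"]) auto
  then show ?thesis
    using j(3) \<open>j < p\<close> by (auto intro: runs_loop_free simp: prefix_sums_step_def)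
qed

definition steps_prefix_sums :: nat where
  "steps_prefix_sums = lf_steps prefix_sums_init
     + (p * (lf_steps prefix_sums_step + 1 + bcost prefix_guard) + 1 + bcost prefix_guard)"

lemma prefix_sums_ok:
  assumes "input_stored s" "within_cells s"
  shows "runs prefix_sums_prog s ready steps_prefix_sums"
  unfolding prefix_sums_prog_def steps_prefix_sums_def
proof (rule runs_SeqI[where R = "prefix_inv p"])
  show "runs prefix_sums_init s (prefix_inv p) (lf_steps prefix_sums_init)"
    using assms
    by (intro runs_loop_free) (simp_all add: prefix_sums_init_def prefix_inv_def input_stored_def
        within_cells_def int_cells_def real_cells_def prefix_sums_stored_def S_0)
next
  fix s1 assume "prefix_inv p s1"
  show "runs (While prefix_guard prefix_sums_step) s1 ready
      (p * (lf_steps prefix_sums_step + 1 + bcost prefix_guard) + 1 + bcost prefix_guard)"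
  proof (rule runs_WhileI[where I = prefix_inv])
    fix j s assume "prefix_inv j s" and stop: "\<not> bval prefix_guard s"
    then obtain j' where j': "imem s (2,11) = int j'" "j' \<le> p" "prefix_sums_stored s j'"
      "input_stored s" "within_cells s"
      unfolding prefix_inv_def by blast
    moreover have "j' = p" using j' stop by (simp add: input_stored_def)
    ultimately show "ready s" unfolding ready_def by simp
  qed (use prefix_sums_loop \<open>prefix_inv p s1\<close> in auto)
qed

end

section \<open>Filling the tables\<close>

text \<open>Registers: \<open>i\<close> in 0, \<open>a\<close> in 1, the split \<open>b\<close> being scanned in 2 and the best split
  so far in 3; in real registers, the best value so far in 0, the two costs whose maximum is
  taken in 1 and 2, the candidate in 3.\<close>

abbreviation alpha_val :: rexp where "alpha_val \<equiv> RL (IC 1) (IC 0)"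
abbreviation beta_val :: rexp where "beta_val \<equiv> RL (IC 1) (IC 1)"
abbreviation gamma_val :: rexp where "gamma_val \<equiv> RL (IC 1) (IC 2)"
abbreviation cand_exp :: "rexp \<Rightarrow> iexp \<Rightarrow> rexp" where
  "cand_exp x bb \<equiv> RAdd (RAdd x alpha_val) (RMul beta_val (RSub (RL (IC 2) (ireg 1)) (RL (IC 2) bb)))"

definition cand_cmd :: "iexp \<Rightarrow> com" where
  "cand_cmd bb = If (RLe (rreg 1) (rreg 2)) (rset 3 (cand_exp (rreg 2) bb))
    (rset 3 (cand_exp (rreg 1) bb))"

definition argmin_update :: com where
  "argmin_update = Seq
    (If (BNot (RLe (rreg 0) (rreg 3))) (Seq (rset 0 (rreg 3)) (iset 3 (ireg 2))) SKIP)
             (iset 2 (inc (ireg 2)))"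

abbreviation scan_guard :: bexp where "scan_guard \<equiv> ILe (inc (ireg 2)) (ireg 1)"

definition rooted_scan_step :: com where
  "rooted_scan_step = Seq (rset 1 (RL (pos (ireg 0)) (neg (ireg 2))))
       (Seq (rset 2 (RL (neg (ireg 2)) (pos (ireg 1)))) (Seq (cand_cmd (ireg 2)) argmin_update))"

definition unrooted_scan_step :: com where
  "unrooted_scan_step = Seq (rset 1 (RL (pos (ireg 0)) (pos (ireg 2))))
       (Seq (rset 2 (RL (neg (ireg 2)) (pos (ireg 1)))) (Seq (cand_cmd (ireg 2)) argmin_update))"

definition rooted_scan_init :: com where
  "rooted_scan_init
    = Seq (rset 0 (RAdd (RL (pos (ireg 0)) (pos (dec (ireg 1)))) (RMul gamma_val (RL (IC 0) (dec
    (ireg 1))))))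
          (Seq (iset 3 (ireg 1)) (iset 2 (inc (ireg 0))))"

definition rooted_scan_finish :: com where
  "rooted_scan_finish = Seq (RStore (pos (ireg 0)) (neg (ireg 1)) (rreg 0))
    (Seq (IStore (pos (ireg 0)) (neg (ireg 1)) (ireg 3))
    (Seq (If (IEq (ireg 3) (ireg 1))
             (IStore (neg (ireg 0)) (pos (ireg 1)) (dec (ireg 1)))
             (IStore (neg (ireg 0)) (pos (ireg 1)) (IL (neg (ireg 0)) (pos (ireg 3)))))
    (Seq (If (ILe (ireg 1) (inc (ireg 0)))
             (RStore (neg (ireg 0)) (pos (ireg 1)) (RC 0))
             (RStore (neg (ireg 0)) (pos (ireg 1)) (rreg 0)))
    (Seq (rset 1 (RL (pos (ireg 0)) (pos (ireg 0))))
    (Seq (rset 2 (RL (neg (ireg 0)) (pos (ireg 1))))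
    (Seq (If (RLe (rreg 1) (rreg 2)) (rset 0 (cand_exp (rreg 2) (ireg 0))) (rset 0 (cand_exp (rreg
      1) (ireg 0))))
    (Seq (iset 3 (ireg 0)) (iset 2 (inc (ireg 0))))))))))"

definition unrooted_scan_finish :: com where
  "unrooted_scan_finish = Seq (RStore (pos (ireg 0)) (pos (ireg 1)) (rreg 0))
     (Seq (IStore (pos (ireg 0)) (pos (ireg 1)) (ireg 3)) (iset 1 (inc (ireg 1))))"

text \<open>Rows are filled from \<open>i = p - 1\<close> down to 0, each by increasing \<open>a\<close>: the entries for
  \<open>(i, a)\<close> need those for \<open>(i, b)\<close>, \<open>b < a\<close>, and \<open>(b, a)\<close>, \<open>b > i\<close>.\<close>

definition column_step :: com where
  "column_step = Seq rooted_scan_init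
    (Seq (While scan_guard rooted_scan_step)
    (Seq rooted_scan_finish (Seq (While scan_guard unrooted_scan_step) unrooted_scan_finish)))"
abbreviation column_guard :: bexp where "column_guard \<equiv> ILe (ireg 1) p_val"
definition row_init :: com where
  "row_init = Seq (RStore (pos (ireg 0)) (pos (ireg 0)) (RC 0)) (iset 1 (inc (ireg 0)))"
definition row_finish :: com where "row_finish = iset 0 (dec (ireg 0))"
definition row_step :: com where "row_step
  = Seq row_init (Seq (While column_guard column_step) row_finish)"
abbreviation row_guard :: bexp where "row_guard \<equiv> ILe (IC 0) (ireg 0)"
definition tables_prog :: com where "tables_prog = Seq (iset 0 (dec p_val)) (While row_guard row_step)"

context dp_machine begin

definition unrooted_cell :: "nat \<Rightarrow> nat \<Rightarrow> int \<times> int" where "unrooted_cell i a = (10 + int i, 10 + int a)"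
definition rooted_cell :: "nat \<Rightarrow> nat \<Rightarrow> int \<times> int" where "rooted_cell i a = (10 + int i, -10 - int a)"
definition tree_cell :: "nat \<Rightarrow> nat \<Rightarrow> int \<times> int" where "tree_cell i a = (-10 - int i, 10 + int a)"

definition rooted_stored :: "state \<Rightarrow> nat \<Rightarrow> nat \<Rightarrow> bool" where
  "rooted_stored s i a \<longleftrightarrow> rmem s (rooted_cell i a) = fst (opt_rooted i a) \<and> imem s (rooted_cell i a)
    = int (snd (opt_rooted i a))
     \<and> imem s (tree_cell i a) = int (dp_root i a) \<and> rmem s (tree_cell i a) = opt_tree i a"
definition unrooted_stored :: "state \<Rightarrow> nat \<Rightarrow> nat \<Rightarrow> bool" where
  "unrooted_stored s i a \<longleftrightarrow> rmem s (unrooted_cell i a) = fst (opt_unrooted i a)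
    \<and> imem s (unrooted_cell i a) = int (snd (opt_unrooted i a))"

definition rows_stored :: "state \<Rightarrow> nat \<Rightarrow> bool" where
  "rows_stored s k \<longleftrightarrow> (\<forall>i' a'. k \<le> i' \<longrightarrow> i' < a' \<longrightarrow> a' \<le> p \<longrightarrow> rooted_stored s i' a'
    \<and> unrooted_stored s i' a')
     \<and> (\<forall>i'. k \<le> i' \<longrightarrow> i' < p \<longrightarrow> rmem s (unrooted_cell i' i') = 0)"

definition row_stored_below :: "state \<Rightarrow> nat \<Rightarrow> nat \<Rightarrow> bool" where
  "row_stored_below s i a \<longleftrightarrow> rows_stored s (Suc i) \<and> rmem s (unrooted_cell i i) = 0 \<and> (\<forall>a'. i < a'
    \<longrightarrow> a' < a \<longrightarrow> rooted_stored s i a' \<and> unrooted_stored s i a')"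

definition frame_regs :: "state \<Rightarrow> state \<Rightarrow> bool" where
  "frame_regs s s' \<longleftrightarrow> (\<forall>x y. x \<noteq> 3 \<longrightarrow> rmem s' (x,y) = rmem s (x,y))
     \<and> (\<forall>x y. x \<noteq> 2 \<longrightarrow> imem s' (x,y) = imem s (x,y))"

definition frame_except :: "state \<Rightarrow> state \<Rightarrow> (int \<times> int) set \<Rightarrow> bool" where
  "frame_except s s' X \<longleftrightarrow> (\<forall>x y. x \<noteq> 3 \<longrightarrow> (x,y) \<notin> X \<longrightarrow> rmem s' (x,y) = rmem s (x,y))
     \<and> (\<forall>x y. x \<noteq> 2 \<longrightarrow> (x,y) \<notin> X \<longrightarrow> imem s' (x,y) = imem s (x,y))"

lemma table_cells_inj[simp]:
  "unrooted_cell i a = unrooted_cell i' a' \<longleftrightarrow> i = i' \<and> a = a'"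
  "rooted_cell i a = rooted_cell i' a' \<longleftrightarrow> i = i' \<and> a = a'"
  "tree_cell i a = tree_cell i' a' \<longleftrightarrow> i = i' \<and> a = a'"
  "unrooted_cell i a \<noteq> rooted_cell i' a'" "unrooted_cell i a \<noteq> tree_cell i' a'"
    "rooted_cell i a \<noteq> tree_cell i' a'"
  "rooted_cell i a \<noteq> unrooted_cell i' a'" "tree_cell i a \<noteq> unrooted_cell i' a'"
    "tree_cell i a \<noteq> rooted_cell i' a'"
  by (auto simp: unrooted_cell_def rooted_cell_def tree_cell_def)

lemma table_cells_row[simp]:
  "fst (unrooted_cell i a) \<noteq> 2" "fst (rooted_cell i a) \<noteq> 2" "fst (tree_cell i a) \<noteq> 2"
  "fst (unrooted_cell i a) \<noteq> 3" "fst (rooted_cell i a) \<noteq> 3" "fst (tree_cell i a) \<noteq> 3"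
  by (simp_all add: unrooted_cell_def rooted_cell_def tree_cell_def)

lemma frame_except_rmem: "frame_except s s' X \<Longrightarrow> c \<notin> X \<Longrightarrow> fst c \<noteq> 3 \<Longrightarrow> rmem s' c = rmem s c"
  unfolding frame_except_def by (cases c) auto
lemma frame_except_imem: "frame_except s s' X \<Longrightarrow> c \<notin> X \<Longrightarrow> fst c \<noteq> 2 \<Longrightarrow> imem s' c = imem s c"
  unfolding frame_except_def by (cases c) auto

lemma frame_except_rooted_stored: "frame_except s s' X \<Longrightarrow> rooted_cell i a \<notin> X \<Longrightarrow> tree_cell i a \<notin> X
  \<Longrightarrow> rooted_stored s i a \<Longrightarrow> rooted_stored s' i a"
  unfolding rooted_stored_def using frame_except_rmem[of s s' X] frame_except_imem[of s s' X] by simp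

lemma frame_except_unrooted_stored: "frame_except s s' X \<Longrightarrow> unrooted_cell i a \<notin> X
  \<Longrightarrow> unrooted_stored s i a \<Longrightarrow> unrooted_stored s' i a"
  unfolding unrooted_stored_def using frame_except_rmem[of s s' X] frame_except_imem[of s s' X] by simp

lemma frame_except_rmem_unrooted: "frame_except s s' X \<Longrightarrow> unrooted_cell i a \<notin> X
  \<Longrightarrow> rmem s' (unrooted_cell i a) = rmem s (unrooted_cell i a)"
  using frame_except_rmem[of s s' X] by simp

lemma frame_except_rows_stored: "frame_except s s' X \<Longrightarrow> (\<forall>i a. k \<le> i \<longrightarrow> rooted_cell i a \<notin> X
  \<and> tree_cell i a \<notin> X \<and> unrooted_cell i a \<notin> X) \<Longrightarrow>
   rows_stored s k \<Longrightarrow> rows_stored s' k"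
  unfolding rows_stored_def
    using frame_except_rooted_stored[of s s' X] frame_except_unrooted_stored[of s s' X]
    frame_except_rmem_unrooted[of s s' X] by simp

lemma other_cells_notin:
  assumes "X \<subseteq> {rooted_cell i a, tree_cell i a, unrooted_cell i a}" and "(i', a') \<noteq> (i, a)"
  shows "rooted_cell i' a' \<notin> X \<and> tree_cell i' a' \<notin> X \<and> unrooted_cell i' a' \<notin> X"
  using assms by auto

lemma frame_except_row_stored_below:
  assumes f: "frame_except s s' X" and X:
    "X \<subseteq> {rooted_cell i a, tree_cell i a, unrooted_cell i a}" and ia: "i < a" and D:
    "row_stored_below s i a"
  shows "row_stored_below s' i a"
proof -
  have "rows_stored s' (Suc i)"
    by (rule frame_except_rows_stored[OF f _])
      (use other_cells_notin[OF X] D in \<open>auto simp: row_stored_below_def\<close>)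
  moreover have "unrooted_cell i i \<notin> X" using X ia by auto
  then have "rmem s' (unrooted_cell i i) = 0"
    using frame_except_rmem_unrooted[OF f, of i i] D by (auto simp: row_stored_below_def)
  moreover have "rooted_stored s' i a' \<and> unrooted_stored s' i a'" if "i < a'" "a' < a" for a'
    using frame_except_rooted_stored[OF f, of i a'] frame_except_unrooted_stored[OF f, of i a']
      other_cells_notin[OF X, of i a'] that D by (auto simp: row_stored_below_def)
  ultimately show ?thesis unfolding row_stored_below_def by blast
qed

lemma frame_except_input_stored: "frame_except s s' X \<Longrightarrow> (\<forall>c\<in>X. fst c \<ge> 10 \<or> fst c \<le> -10)
  \<Longrightarrow> input_stored s \<Longrightarrow> input_stored s'"
proof -
  assume f: "frame_except s s' X" and X: "\<forall>c\<in>X. fst c \<ge> 10 \<or> fst c \<le> -10" and i: "input_stored s"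
  have nx: "c \<notin> X" if "fst c = 0 \<or> fst c = 1" for c using X that by force
  have r: "rmem s' c = rmem s c" if "fst c = 0 \<or> fst c = 1" for c
    by (rule frame_except_rmem[OF f nx[OF that]]) (use that in auto)
  have ii: "imem s' (0,0) = imem s (0,0)" by (rule frame_except_imem[OF f nx]) auto
  show "input_stored s'" using i r ii unfolding input_stored_def by simp
qed

lemma frame_except_prefix_sums_stored: "frame_except s s' X \<Longrightarrow> (\<forall>c\<in>X. fst c \<ge> 10 \<or> fst c \<le> -10)
  \<Longrightarrow> prefix_sums_stored s k \<Longrightarrow> prefix_sums_stored s' k"
proof -
  assume f: "frame_except s s' X" and X: "\<forall>c\<in>X. fst c \<ge> 10 \<or> fst c \<le> -10" and i:
    "prefix_sums_stored s k"
  have nx: "c \<notin> X" if "fst c = 2" for c using X that by force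
  have r: "rmem s' c = rmem s c" if "fst c = 2" for c
    by (rule frame_except_rmem[OF f nx[OF that]]) (use that in auto)
  show "prefix_sums_stored s' k" using i r unfolding prefix_sums_stored_def by simp
qed

lemma frame_regs_rows_stored: "frame_regs s s' \<Longrightarrow> rows_stored s k \<Longrightarrow> rows_stored s' k"
  unfolding frame_regs_def rows_stored_def rooted_stored_def unrooted_stored_def unrooted_cell_def
    rooted_cell_def tree_cell_def by simp

lemma frame_regs_row_stored_below: "frame_regs s s' \<Longrightarrow> row_stored_below s i a \<Longrightarrow> row_stored_below s' i a"
  unfolding row_stored_below_def using frame_regs_rows_stored[of s s']
    unfolding frame_regs_def rooted_stored_def unrooted_stored_def unrooted_cell_def
    rooted_cell_def tree_cell_def by simp

lemma frame_regs_input_stored: "frame_regs s s' \<Longrightarrow> input_stored s \<Longrightarrow> input_stored s'"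
  unfolding frame_regs_def input_stored_def by simp

lemma frame_regs_prefix_sums_stored: "frame_regs s s' \<Longrightarrow> prefix_sums_stored s k
  \<Longrightarrow> prefix_sums_stored s' k"
  unfolding frame_regs_def prefix_sums_stored_def by simp

definition rooted_scan_inv :: "nat \<Rightarrow> nat \<Rightarrow> nat \<Rightarrow> state \<Rightarrow> bool" where
  "rooted_scan_inv i a k s \<longleftrightarrow> ready s \<and> row_stored_below s i a \<and> imem s (2,0) = int i \<and> imem s (2,1)
    = int a \<and> i < a \<and> a \<le> p
     \<and> (\<exists>b. imem s (2,2) = int b \<and> Suc i \<le> b \<and> b \<le> a \<and> k = a - b
          \<and> rmem s (3,0)
            = fst (foldl (argmin_step (cand_rooted i a)) (cand_rooted i a a, a) [Suc i..<b])
          \<and> imem s (2,3)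
            = int (snd (foldl (argmin_step (cand_rooted i a)) (cand_rooted i a a, a) [Suc i..<b])))"

lemma rooted_scan_step_ok:
  assumes I: "rooted_scan_inv i a (Suc k) s" and g: "bval scan_guard s"
  shows "rooted_scan_inv i a k (lf_exec rooted_scan_step s)"
proof -
  from I obtain b where b: "imem s (2,2) = int b" "Suc i \<le> b" "b \<le> a" "Suc k = a - b"
    "rmem s (3,0) = fst (foldl (argmin_step (cand_rooted i a)) (cand_rooted i a a, a) [Suc i..<b])"
    "imem s (2,3) = int
      (snd (foldl (argmin_step (cand_rooted i a)) (cand_rooted i a a, a) [Suc i..<b]))"
    and B: "ready s" "row_stored_below s i a" "imem s (2,0) = int i" "imem s (2,1) = int a" "i < a"
      "a \<le> p"
    unfolding rooted_scan_inv_def by blast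
  have ba: "b < a" using b by simp
  have t1: "rooted_stored s i b" using B(2) b(2) ba unfolding row_stored_below_def by simp
  have t2: "rooted_stored s b a" using B(2) b(2) ba B(6)
    unfolding row_stored_below_def rows_stored_def by simp
  have Sa: "rmem s (2, int a) = S a" and Sb: "rmem s (2, int b) = S b"
    using B(1) B(6) ba unfolding ready_def prefix_sums_stored_def by auto
  have ab: "rmem s (1,0) = \<alpha>" "rmem s (1,1) = \<beta>" using B(1) unfolding ready_def input_stored_def by auto
  define fo where "fo = foldl (argmin_step (cand_rooted i a)) (cand_rooted i a a, a) [Suc i..<b]"
  have cand: "cand_rooted i a b = max (fst (opt_rooted i b)) (opt_tree b a) + \<alpha> + \<beta> * (S a - S b)"
    using ba by (simp add: cand_rooted_def)
  have fo': "foldl (argmin_step (cand_rooted i a)) (cand_rooted i a a, a) [Suc i..<Suc b]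
    = argmin_step (cand_rooted i a) fo b"
    using b(2) unfolding fo_def by simp
  let ?s' = "lf_exec rooted_scan_step s"
  have frame: "frame_regs s ?s'"
    unfolding frame_regs_def rooted_scan_step_def cand_cmd_def argmin_update_def by simp
  have regs: "imem ?s' (2,0) = int i" "imem ?s' (2,1) = int a" "imem ?s' (2,2) = int (Suc b)"
    using B b unfolding rooted_scan_step_def cand_cmd_def argmin_update_def by simp_all
  have vals: "rmem ?s' (3,0) = fst (argmin_step (cand_rooted i a) fo b) \<and> imem ?s' (2,3)
    = int (snd (argmin_step (cand_rooted i a) fo b))"
    using t1 t2 B b Sa Sb ab
      unfolding rooted_scan_step_def cand_cmd_def argmin_update_def rooted_stored_def
      rooted_cell_def tree_cell_def argmin_step_def cand fo_def[symmetric]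
    by (auto simp: max_def)
  have cells: "within_cells ?s'" using B(1,3,4,6) b ba
    unfolding ready_def within_cells_def int_cells_def real_cells_def rooted_scan_step_def
    cand_cmd_def argmin_update_def by simp
  show ?thesis unfolding rooted_scan_inv_def
    using frame_regs_row_stored_below[OF frame B(2)] frame_regs_input_stored[OF frame]
      frame_regs_prefix_sums_stored[OF frame] B(1) cells regs vals fo' b ba B(5,6)
    unfolding ready_def
    by (intro conjI exI[of _ "Suc b"]) (auto simp: fo_def)
qed

lemma frame_regs_rooted_stored: "frame_regs s s' \<Longrightarrow> rooted_stored s i a \<Longrightarrow> rooted_stored s' i a"
  unfolding frame_regs_def rooted_stored_def rooted_cell_def tree_cell_def by simp

definition unrooted_scan_inv :: "nat \<Rightarrow> nat \<Rightarrow> nat \<Rightarrow> state \<Rightarrow> bool" where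
  "unrooted_scan_inv i a k s \<longleftrightarrow> ready s \<and> row_stored_below s i a \<and> rooted_stored s i a
    \<and> imem s (2,0) = int i \<and> imem s (2,1) = int a \<and> i < a \<and> a \<le> p
     \<and> (\<exists>b. imem s (2,2) = int b \<and> Suc i \<le> b \<and> b \<le> a \<and> k = a - b
          \<and> rmem s (3,0)
            = fst (foldl (argmin_step (cand_unrooted i a)) (cand_unrooted i a i, i) [Suc i..<b])
          \<and> imem s (2,3)
            = int (snd (foldl (argmin_step (cand_unrooted i a)) (cand_unrooted i a i, i) [Suc i..<b])))"

lemma unrooted_scan_step_ok:
  assumes I: "unrooted_scan_inv i a (Suc k) s" and g: "bval scan_guard s"
  shows "unrooted_scan_inv i a k (lf_exec unrooted_scan_step s)"
proof -
  from I obtain b where b: "imem s (2,2) = int b" "Suc i \<le> b" "b \<le> a" "Suc k = a - b"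
    "rmem s (3,0) = fst (foldl (argmin_step (cand_unrooted i a)) (cand_unrooted i a i, i) [Suc i..<b])"
    "imem s (2,3) = int
      (snd (foldl (argmin_step (cand_unrooted i a)) (cand_unrooted i a i, i) [Suc i..<b]))"
    and B: "ready s" "row_stored_below s i a" "imem s (2,0) = int i" "imem s (2,1) = int a" "i < a"
      "a \<le> p" "rooted_stored s i a"
    unfolding unrooted_scan_inv_def by blast
  have ba: "b < a" using b by simp
  have t1: "unrooted_stored s i b" using B(2) b(2) ba unfolding row_stored_below_def by simp
  have t2: "rooted_stored s b a" using B(2) b(2) ba B(6)
    unfolding row_stored_below_def rows_stored_def by simp
  have Sa: "rmem s (2, int a) = S a" and Sb: "rmem s (2, int b) = S b"
    using B(1) B(6) ba unfolding ready_def prefix_sums_stored_def by auto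
  have ab: "rmem s (1,0) = \<alpha>" "rmem s (1,1) = \<beta>" using B(1) unfolding ready_def input_stored_def by auto
  define fo where "fo = foldl (argmin_step (cand_unrooted i a)) (cand_unrooted i a i, i) [Suc i..<b]"
  have cand: "cand_unrooted i a b = max (fst (opt_unrooted i b)) (opt_tree b a) + \<alpha> + \<beta> * (S a - S b)"
    by (simp add: cand_unrooted_def)
  have fo': "foldl (argmin_step (cand_unrooted i a)) (cand_unrooted i a i, i) [Suc i..<Suc b]
    = argmin_step (cand_unrooted i a) fo b"
    using b(2) unfolding fo_def by simp
  let ?s' = "lf_exec unrooted_scan_step s"
  have frame: "frame_regs s ?s'"
    unfolding frame_regs_def unrooted_scan_step_def cand_cmd_def argmin_update_def by simp
  have regs: "imem ?s' (2,0) = int i" "imem ?s' (2,1) = int a" "imem ?s' (2,2) = int (Suc b)"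
    using B b unfolding unrooted_scan_step_def cand_cmd_def argmin_update_def by simp_all
  have vals: "rmem ?s' (3,0) = fst (argmin_step (cand_unrooted i a) fo b) \<and> imem ?s' (2,3)
    = int (snd (argmin_step (cand_unrooted i a) fo b))"
    using t1 t2 B b Sa Sb ab
      unfolding unrooted_scan_step_def cand_cmd_def argmin_update_def rooted_stored_def
      unrooted_stored_def unrooted_cell_def tree_cell_def argmin_step_def cand fo_def[symmetric]
    by (auto simp: max_def)
  have cells: "within_cells ?s'" using B(1,3,4,6) b ba
    unfolding ready_def within_cells_def int_cells_def real_cells_def unrooted_scan_step_def
    cand_cmd_def argmin_update_def by simp
  show ?thesis unfolding unrooted_scan_inv_def
    using frame_regs_row_stored_below[OF frame B(2)] frame_regs_input_stored[OF frame]
      frame_regs_prefix_sums_stored[OF frame] frame_regs_rooted_stored[OF frame B(7)] B(1) cells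
      regs vals fo' b ba B(5,6)
    unfolding ready_def
    by (intro conjI exI[of _ "Suc b"]) (auto simp: fo_def)
qed

lemma rooted_scan_init_ok:
  assumes B: "ready s" "row_stored_below s i a" "imem s (2,0) = int i" "imem s (2,1) = int a"
    "i < a" "a \<le> p"
  shows "rooted_scan_inv i a (a - Suc i) (lf_exec rooted_scan_init s)"
proof -
  have a1: "int a - 1 = int (a - 1)" using B(5) by simp
  have Pv: "rmem s (10 + int i, 10 + int (a - 1)) = fst (opt_unrooted i (a - 1))"
  proof (cases "a - 1 = i")
    case True
    then show ?thesis using B(2)
      by (simp add: row_stored_below_def unrooted_cell_def opt_unrooted_empty)
  next
    case False
    then have "unrooted_stored s i (a - 1)" using B(2,5) unfolding row_stored_below_def by simp
    then show ?thesis by (simp add: unrooted_stored_def unrooted_cell_def)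
  qed
  have H: "\<forall>j<p. rmem s (0, int j) = m j" and gamma: "rmem s (1,2) = \<gamma>"
    using B(1) unfolding ready_def input_stored_def by auto
  have "a - 1 < p" using B(5,6) by simp
  then have mv: "rmem s (0, int (a - 1)) = m (a - 1)" using H by blast
  let ?s' = "lf_exec rooted_scan_init s"
  have frame: "frame_regs s ?s'" unfolding frame_regs_def rooted_scan_init_def by simp
  have cells: "within_cells ?s'" using B(1,3,4,6)
    unfolding ready_def within_cells_def int_cells_def real_cells_def rooted_scan_init_def by simp
  have vals: "rmem ?s' (3,0) = cand_rooted i a a" "imem ?s' (2,3) = int a" "imem ?s' (2,2)
    = int (Suc i)"
    "imem ?s' (2,0) = int i" "imem ?s' (2,1) = int a"
    using B Pv[folded a1] mv[folded a1] gamma unfolding rooted_scan_init_def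
      by (simp_all add: cand_rooted_def)
  show ?thesis unfolding rooted_scan_inv_def
    using frame_regs_row_stored_below[OF frame B(2)] frame_regs_input_stored[OF frame]
      frame_regs_prefix_sums_stored[OF frame] B(1,5,6) cells vals
    unfolding ready_def
    by (intro conjI exI[of _ "Suc i"]) auto
qed

lemma rooted_scan_finish_ok:
  assumes I: "rooted_scan_inv i a j s" and g: "\<not> bval scan_guard s"
  shows "unrooted_scan_inv i a (a - Suc i) (lf_exec rooted_scan_finish s)"
proof -
  from I obtain b where b: "imem s (2,2) = int b" "Suc i \<le> b" "b \<le> a"
    "rmem s (3,0) = fst (foldl (argmin_step (cand_rooted i a)) (cand_rooted i a a, a) [Suc i..<b])"
    "imem s (2,3) = int
      (snd (foldl (argmin_step (cand_rooted i a)) (cand_rooted i a a, a) [Suc i..<b]))"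
    and B: "ready s" "row_stored_below s i a" "imem s (2,0) = int i" "imem s (2,1) = int a" "i < a"
      "a \<le> p"
    unfolding rooted_scan_inv_def by blast
  have ba: "b = a" using g b B(4) by simp
  have best: "rmem s (3,0) = fst (opt_rooted i a)" "imem s (2,3) = int (snd (opt_rooted i a))"
    using b(4,5) ba opt_rooted_eq[OF B(5)] by simp_all
  define c where "c = snd (opt_rooted i a)"
  have Rp: "c = a \<or> (i < c \<and> c < a)" using opt_rooted_argmin[OF B(5)] c_def by blast
  have a1: "int a - 1 = int (a - 1)" using B(5) by simp
  have root: "imem s (-10 - int i, 10 + int c) = int (dp_root i c)" if "i < c" "c < a"
    using B(2) that unfolding row_stored_below_def rooted_stored_def tree_cell_def by simp
  have rootR_eq: "dp_root i a = (if c = a then a - 1 else dp_root i c)"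
    using Rp B(5) unfolding c_def by (subst dp_root.simps) auto
  have Pii: "rmem s (10 + int i, 10 + int i) = 0" using B(2)
    by (simp add: row_stored_below_def unrooted_cell_def)
  have Sa: "rmem s (2, int a) = S a" and Si: "rmem s (2, int i) = S i"
    using B(1) B(6) B(5) unfolding ready_def prefix_sums_stored_def by auto
  have ab: "rmem s (1,0) = \<alpha>" "rmem s (1,1) = \<beta>" using B(1) unfolding ready_def input_stored_def by auto
  have F1: "opt_tree i a = (if a \<le> Suc i then 0 else fst (opt_rooted i a))"
    by (simp add: opt_tree.simps opt_tree.simps)
  have cPi: "cand_unrooted i a i = max 0 (opt_tree i a) + \<alpha> + \<beta> * (S a - S i)"
    by (simp add: cand_unrooted_def opt_unrooted_empty)
  let ?s' = "lf_exec rooted_scan_finish s"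
  have frame: "frame_except s ?s' {rooted_cell i a, tree_cell i a}"
    unfolding frame_except_def rooted_scan_finish_def using B(3,4)
    by (simp add: rooted_cell_def tree_cell_def)
  have X: "\<forall>c\<in>{rooted_cell i a, tree_cell i a}. fst c \<ge> 10 \<or> fst c \<le> -10"
    by (simp add: rooted_cell_def tree_cell_def)
  have cells: "within_cells ?s'" using B(1,3,4,6) B(5)
    unfolding ready_def within_cells_def int_cells_def real_cells_def rooted_scan_finish_def by simp
  have tR: "rooted_stored ?s' i a"
    using B(3,4) best Rp root rootR_eq a1[symmetric] F1
      unfolding rooted_stored_def rooted_scan_finish_def rooted_cell_def tree_cell_def c_def[symmetric]
    by (cases "c = a") auto
  have vals: "rmem ?s' (3,0) = cand_unrooted i a i" "imem ?s' (2,3) = int i" "imem ?s' (2,2)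
    = int (Suc i)"
    "imem ?s' (2,0) = int i" "imem ?s' (2,1) = int a"
    using B(3,4) best Pii Sa Si ab F1 unfolding rooted_scan_finish_def cPi by (auto simp: max_def)
  show ?thesis unfolding unrooted_scan_inv_def
    using frame_except_row_stored_below[OF frame _ B(5) B(2)] frame_except_input_stored[OF frame X]
      frame_except_prefix_sums_stored[OF frame X] B(1,5,6) cells vals tR
    unfolding ready_def
    by (intro conjI exI[of _ "Suc i"]) auto
qed

definition column_inv :: "nat \<Rightarrow> nat \<Rightarrow> state \<Rightarrow> bool" where
  "column_inv i k s \<longleftrightarrow> ready s \<and> imem s (2,0) = int i \<and> i < p
     \<and> (\<exists>a. row_stored_below s i a \<and> imem s (2,1) = int a \<and> i < a \<and> a \<le> Suc p \<and> k = Suc p - a)"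

lemma unrooted_scan_finish_ok:
  assumes I: "unrooted_scan_inv i a j s" and g: "\<not> bval scan_guard s"
  shows "column_inv i (p - a) (lf_exec unrooted_scan_finish s)"
proof -
  from I obtain b where b: "imem s (2,2) = int b" "Suc i \<le> b" "b \<le> a"
    "rmem s (3,0) = fst (foldl (argmin_step (cand_unrooted i a)) (cand_unrooted i a i, i) [Suc i..<b])"
    "imem s (2,3) = int
      (snd (foldl (argmin_step (cand_unrooted i a)) (cand_unrooted i a i, i) [Suc i..<b]))"
    and B: "ready s" "row_stored_below s i a" "imem s (2,0) = int i" "imem s (2,1) = int a" "i < a"
      "a \<le> p" "rooted_stored s i a"
    unfolding unrooted_scan_inv_def by blast
  have ba: "b = a" using g b B(4) by simp
  have best: "rmem s (3,0) = fst (opt_unrooted i a)" "imem s (2,3) = int (snd (opt_unrooted i a))"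
    using b(4,5) ba opt_unrooted_eq[OF B(5)] by simp_all
  let ?s' = "lf_exec unrooted_scan_finish s"
  have frame: "frame_except s ?s' {unrooted_cell i a}"
    unfolding frame_except_def unrooted_scan_finish_def using B(3,4) by (simp add: unrooted_cell_def)
  have X: "\<forall>c\<in>{unrooted_cell i a}. fst c \<ge> 10 \<or> fst c \<le> -10" by (simp add: unrooted_cell_def)
  have cells: "within_cells ?s'" using B(1,3,4,6) B(5)
    unfolding ready_def within_cells_def int_cells_def real_cells_def unrooted_scan_finish_def by simp
  have tP: "unrooted_stored ?s' i a" using B(3,4) best
    unfolding unrooted_stored_def unrooted_scan_finish_def unrooted_cell_def by simp
  have tR: "rooted_stored ?s' i a" by (rule frame_except_rooted_stored[OF frame _ _ B(7)]) simp_all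
  have D': "row_stored_below ?s' i a" by (rule frame_except_row_stored_below[OF frame _ B(5) B(2)]) auto
  have D'': "row_stored_below ?s' i (Suc a)" using D' tP tR unfolding row_stored_below_def
    using less_Suc_eq by auto
  have vals: "imem ?s' (2,0) = int i" "imem ?s' (2,1) = int (Suc a)"
    using B(3,4) unfolding unrooted_scan_finish_def by simp_all
  show ?thesis unfolding column_inv_def
    using frame_except_input_stored[OF frame X] frame_except_prefix_sums_stored[OF frame X]
      B(1,5,6) cells vals D''
    unfolding ready_def
    by (intro conjI exI[of _ "Suc a"]) auto
qed

definition steps_rooted_scan :: nat where "steps_rooted_scan = p * (lf_steps rooted_scan_step + 1
  + bcost scan_guard) + 1 + bcost scan_guard"
definition steps_unrooted_scan :: nat where "steps_unrooted_scan = p * (lf_steps unrooted_scan_step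
  + 1 + bcost scan_guard) + 1 + bcost scan_guard"
definition steps_column :: nat where "steps_column = lf_steps rooted_scan_init + (steps_rooted_scan
  + (lf_steps rooted_scan_finish + (steps_unrooted_scan + lf_steps unrooted_scan_finish)))"
definition steps_columns :: nat where "steps_columns = p * (steps_column + 1 + bcost column_guard)
  + 1 + bcost column_guard"
definition steps_row :: nat where "steps_row = lf_steps row_init + (steps_columns
  + lf_steps row_finish)"
definition steps_rows :: nat where "steps_rows = p * (steps_row + 1 + bcost row_guard) + 1
  + bcost row_guard"

lemma rooted_scan_loop: "rooted_scan_inv i a k s \<Longrightarrow> bval scan_guard s \<Longrightarrow> 0 < k
  \<and> runs rooted_scan_step s (rooted_scan_inv i a (k - 1)) (lf_steps rooted_scan_step)"
proof -
  assume I: "rooted_scan_inv i a k s" and g: "bval scan_guard s"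
  have k: "0 < k" using I g unfolding rooted_scan_inv_def by auto
  then obtain k' where k': "k = Suc k'" by (cases k) auto
  show ?thesis using k rooted_scan_step_ok[OF I[unfolded k'] g] k'
    by (auto intro!: runs_loop_free simp: rooted_scan_step_def cand_cmd_def argmin_update_def)
qed

lemma unrooted_scan_loop: "unrooted_scan_inv i a k s \<Longrightarrow> bval scan_guard s \<Longrightarrow> 0 < k
  \<and> runs unrooted_scan_step s (unrooted_scan_inv i a (k - 1)) (lf_steps unrooted_scan_step)"
proof -
  assume I: "unrooted_scan_inv i a k s" and g: "bval scan_guard s"
  have k: "0 < k" using I g unfolding unrooted_scan_inv_def by auto
  then obtain k' where k': "k = Suc k'" by (cases k) auto
  show ?thesis using k unrooted_scan_step_ok[OF I[unfolded k'] g] k'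
    by (auto intro!: runs_loop_free simp: unrooted_scan_step_def cand_cmd_def argmin_update_def)
qed

lemma column_loop: "column_inv i k s \<Longrightarrow> bval column_guard s \<Longrightarrow> 0 < k
  \<and> runs column_step s (column_inv i (k - 1)) steps_column"
proof -
  assume I: "column_inv i k s" and g: "bval column_guard s"
  from I obtain a where a: "row_stored_below s i a" "imem s (2,1) = int a" "i < a" "a \<le> Suc p" "k
    = Suc p - a"
    and B: "ready s" "imem s (2,0) = int i" "i < p" unfolding column_inv_def by blast
  have ap: "a \<le> p" using g a(2) B(1) by (simp add: ready_def input_stored_def)
  have k: "0 < k" using a ap by simp
  have "runs column_step s (column_inv i (p - a)) steps_column"
    unfolding column_step_def steps_column_def
  proof (rule runs_SeqI[where R = "rooted_scan_inv i a (a - Suc i)"])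
    show "runs rooted_scan_init s (rooted_scan_inv i a (a - Suc i)) (lf_steps rooted_scan_init)"
      by (rule runs_loop_free)
        (use rooted_scan_init_ok[OF B(1) a(1) B(2) a(2) a(3) ap] in \<open>simp_all add:
        rooted_scan_init_def\<close>)
  next
    fix s1 assume s1: "rooted_scan_inv i a (a - Suc i) s1"
    show "runs (Seq (While scan_guard rooted_scan_step)
      (Seq rooted_scan_finish (Seq (While scan_guard unrooted_scan_step) unrooted_scan_finish))) s1
      (column_inv i (p - a)) (steps_rooted_scan
      + (lf_steps rooted_scan_finish + (steps_unrooted_scan + lf_steps unrooted_scan_finish)))"
    proof (rule runs_SeqI[where R = "\<lambda>s. \<exists>j. rooted_scan_inv i a j s \<and> \<not> bval scan_guard s"])
      show "runs (While scan_guard rooted_scan_step) s1 (\<lambda>s. \<exists>j. rooted_scan_inv i a j s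
        \<and> \<not> bval scan_guard s) steps_rooted_scan"
        unfolding steps_rooted_scan_def by (rule runs_WhileI[OF rooted_scan_loop s1]) (use ap in auto)
    next
      fix s2 assume "\<exists>j. rooted_scan_inv i a j s2 \<and> \<not> bval scan_guard s2"
      then obtain j where s2: "rooted_scan_inv i a j s2" "\<not> bval scan_guard s2" by blast
      show "runs (Seq rooted_scan_finish
        (Seq (While scan_guard unrooted_scan_step) unrooted_scan_finish)) s2 (column_inv i
        (p - a)) (lf_steps rooted_scan_finish + (steps_unrooted_scan + lf_steps unrooted_scan_finish))"
      proof (rule runs_SeqI[where R = "unrooted_scan_inv i a (a - Suc i)"])
        show "runs rooted_scan_finish s2 (unrooted_scan_inv i a (a - Suc i))
          (lf_steps rooted_scan_finish)"
          by (rule runs_loop_free)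
            (use rooted_scan_finish_ok[OF s2] in \<open>simp_all add: rooted_scan_finish_def\<close>)
      next
        fix s3 assume s3: "unrooted_scan_inv i a (a - Suc i) s3"
        show "runs (Seq (While scan_guard unrooted_scan_step) unrooted_scan_finish) s3
          (column_inv i (p - a)) (steps_unrooted_scan + lf_steps unrooted_scan_finish)"
        proof (rule runs_SeqI[where R = "\<lambda>s. \<exists>j. unrooted_scan_inv i a j s \<and> \<not> bval scan_guard s"])
          show "runs (While scan_guard unrooted_scan_step) s3 (\<lambda>s. \<exists>j. unrooted_scan_inv i a j s
            \<and> \<not> bval scan_guard s) steps_unrooted_scan"
            unfolding steps_unrooted_scan_def
              by (rule runs_WhileI[OF unrooted_scan_loop s3]) (use ap in auto)
        next
          fix s4 assume "\<exists>j. unrooted_scan_inv i a j s4 \<and> \<not> bval scan_guard s4"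
          then obtain j where s4: "unrooted_scan_inv i a j s4" "\<not> bval scan_guard s4" by blast
          show "runs unrooted_scan_finish s4 (column_inv i (p - a)) (lf_steps unrooted_scan_finish)"
            by (rule runs_loop_free)
              (use unrooted_scan_finish_ok[OF s4] in \<open>simp_all add: unrooted_scan_finish_def\<close>)
        qed
      qed
    qed
  qed
  moreover have "p - a = k - 1" using a(5) by simp
  ultimately show ?thesis using k by simp
qed

definition row_inv :: "nat \<Rightarrow> state \<Rightarrow> bool" where
  "row_inv k s \<longleftrightarrow> ready s \<and> k \<le> p \<and> imem s (2,0) = int k - 1 \<and> rows_stored s k"

lemma rows_stored_of_row_complete:
  assumes "row_stored_below s i (Suc p)"
  shows "rows_stored s i"
  unfolding rows_stored_def
proof (rule conjI; intro allI impI)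
  fix i' a' assume "i \<le> i'" "i' < a'" "a' \<le> p"
  then show "rooted_stored s i' a' \<and> unrooted_stored s i' a'"
    using assms unfolding row_stored_below_def rows_stored_def by (cases "i' = i") auto
next
  fix i' assume "i \<le> i'" "i' < p"
  then show "rmem s (unrooted_cell i' i') = 0"
    using assms unfolding row_stored_below_def rows_stored_def by (cases "i' = i") auto
qed

lemma row_init_ok:
  assumes "row_inv (Suc i) s"
  shows "column_inv i (p - i) (lf_exec row_init s)"
proof -
  let ?s' = "lf_exec row_init s"
  have B: "ready s" "i < p" "imem s (2,0) = int i" "rows_stored s (Suc i)"
    using assms unfolding row_inv_def by auto
  have frame: "frame_except s ?s' {unrooted_cell i i}"
    unfolding frame_except_def row_init_def using B(3) by (simp add: unrooted_cell_def)
  have far: "\<forall>c\<in>{unrooted_cell i i}. fst c \<ge> 10 \<or> fst c \<le> -10" by (simp add: unrooted_cell_def)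
  have "within_cells ?s'"
    using B unfolding ready_def within_cells_def int_cells_def real_cells_def row_init_def by simp
  moreover have "rows_stored ?s' (Suc i)" by (rule frame_except_rows_stored[OF frame _ B(4)]) auto
  moreover have "rmem ?s' (unrooted_cell i i) = 0" using B(3)
    unfolding row_init_def unrooted_cell_def by simp
  ultimately show ?thesis
    using frame_except_input_stored[OF frame far] frame_except_prefix_sums_stored[OF frame far] B
    unfolding column_inv_def ready_def row_stored_below_def
    by (intro conjI exI[of _ "Suc i"]) (auto simp: row_init_def)
qed

lemma row_finish_ok:
  assumes "column_inv i j s" and "\<not> bval column_guard s"
  shows "row_inv i (lf_exec row_finish s)"
proof -
  obtain a where a: "row_stored_below s i a" "imem s (2,1) = int a" "a \<le> Suc p"
    and B: "ready s" "imem s (2,0) = int i" "i < p"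
    using assms(1) unfolding column_inv_def by blast
  have "a = Suc p" using a assms(2) B(1) by (simp add: ready_def input_stored_def)
  then have rows: "rows_stored s i" using rows_stored_of_row_complete a(1) by simp
  let ?s' = "lf_exec row_finish s"
  have frame: "frame_regs s ?s'" unfolding frame_regs_def row_finish_def by simp
  have "within_cells ?s'"
    using B unfolding ready_def within_cells_def int_cells_def real_cells_def row_finish_def by simp
  then show ?thesis
    using frame_regs_rows_stored[OF frame rows] frame_regs_input_stored[OF frame]
      frame_regs_prefix_sums_stored[OF frame] B
    unfolding row_inv_def ready_def by (auto simp: row_finish_def)
qed

lemma row_loop:
  assumes I: "row_inv k s" and g: "bval row_guard s"
  shows "0 < k \<and> runs row_step s (row_inv (k - 1)) steps_row"
proof -
  have "0 < k" using I g unfolding row_inv_def by simp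
  then obtain i where k: "k = Suc i" using gr0_conv_Suc by blast
  have "runs row_step s (row_inv i) steps_row"
    unfolding row_step_def steps_row_def
  proof (rule runs_SeqI[where R = "column_inv i (p - i)"])
    show "runs row_init s (column_inv i (p - i)) (lf_steps row_init)"
      by (rule runs_loop_free) (use row_init_ok[OF I[unfolded k]] in \<open>simp_all add: row_init_def\<close>)
  next
    fix s2 assume s2: "column_inv i (p - i) s2"
    show "runs (Seq (While column_guard column_step) row_finish) s2 (row_inv i) (steps_columns
      + lf_steps row_finish)"
    proof (rule runs_SeqI[where R = "\<lambda>s. \<exists>j. column_inv i j s \<and> \<not> bval column_guard s"])
      show "runs (While column_guard column_step) s2 (\<lambda>s. \<exists>j. column_inv i j s
        \<and> \<not> bval column_guard s) steps_columns"
        unfolding steps_columns_def by (rule runs_WhileI[OF column_loop s2]) auto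
    next
      fix s3 assume "\<exists>j. column_inv i j s3 \<and> \<not> bval column_guard s3"
      then show "runs row_finish s3 (row_inv i) (lf_steps row_finish)"
        using row_finish_ok by (intro runs_loop_free) (auto simp: row_finish_def)
    qed
  qed
  then show ?thesis using k by simp
qed

lemma tables_prog_ok: "ready s \<Longrightarrow> runs tables_prog s (\<lambda>s. ready s
  \<and> rows_stored s 0) (lf_steps (iset 0 (dec p_val)) + steps_rows)"
proof -
  assume B: "ready s"
  let ?s1 = "lf_exec (iset 0 (dec p_val)) s"
  have frame: "frame_regs s ?s1" unfolding frame_regs_def by simp
  have used1: "within_cells ?s1" using B unfolding ready_def within_cells_def int_cells_def by simp
  have R: "rows_stored ?s1 p" unfolding rows_stored_def by simp
  have II1: "row_inv p ?s1"
    using frame_regs_input_stored[OF frame] frame_regs_prefix_sums_stored[OF frame] used1 B R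
    unfolding row_inv_def ready_def input_stored_def by simp
  show ?thesis unfolding tables_prog_def
  proof (rule runs_SeqI[where R = "row_inv p"])
    show "runs (iset 0 (dec p_val)) s (row_inv p) (lf_steps (iset 0 (dec p_val)))"
      by (rule runs_loop_free) (use II1 in simp_all)
  next
    fix s1 assume "row_inv p s1"
    show "runs (While row_guard row_step) s1 (\<lambda>s. ready s \<and> rows_stored s 0) steps_rows"
      unfolding steps_rows_def
    proof (rule runs_WhileI[OF row_loop \<open>row_inv p s1\<close>])
      fix j s assume "row_inv j s" "\<not> bval row_guard s"
      then show "ready s \<and> rows_stored s 0" unfolding row_inv_def by (cases j) auto
    qed auto
  qed
qed

end

section \<open>Reading off the parent map\<close>

text \<open>For each vertex \<open>v\<close> the program descends from the interval \<open>[0, p)\<close> to the subtree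
  containing \<open>v\<close> until \<open>v\<close> is the root. Registers: \<open>v\<close> in 4, the current interval
  \<open>[cb, cc)\<close> in 5 and 6, the parent of its root in 7 and the root in 8. The entries of the
  root are scanned from the right along the stored splits: the current right end is in 9,
  register 10 tells whether the copy marker has been passed, the start of the entry is
  loaded into 3, and the flags 12 and 11 signal that the child containing \<open>v\<close> was found
  and that the parent of \<open>v\<close> was output.\<close>

abbreviation find_guard :: bexp where "find_guard \<equiv> ILe (ireg 12) (IC 0)"

definition find_child_step :: com where
  "find_child_step = If (ILe (ireg 10) (IC 0))
     (Seq (iset 3 (IL (pos (ireg 5)) (neg (ireg 9))))
        (If (IEq (ireg 3) (ireg 9))
           (Seq (iset 10 (IC 1)) (iset 9 (dec (ireg 9))))
           (If (ILe (ireg 3) (ireg 4)) (iset 12 (IC 1)) (iset 9 (ireg 3)))))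
     (Seq (iset 3 (IL (pos (ireg 5)) (pos (ireg 9))))
        (If (ILe (ireg 3) (ireg 4)) (iset 12 (IC 1)) (iset 9 (ireg 3))))"

abbreviation descend_guard :: bexp where "descend_guard \<equiv> ILe (ireg 11) (IC 0)"
abbreviation vertex_guard :: bexp where "vertex_guard \<equiv> ILe (inc (ireg 4)) p_val"

definition load_root :: com where
  "load_root = If (ILe (ireg 6) (inc (ireg 5))) (iset 8 (ireg 5))
    (iset 8 (IL (neg (ireg 5)) (pos (ireg 6))))"
definition emit_parent :: com where "emit_parent
  = Seq (IStore (IC 1) (ireg 4) (ireg 7)) (iset 11 (IC 1))"
definition find_child_init :: com where "find_child_init
  = Seq (iset 9 (ireg 6)) (Seq (iset 10 (IC 0)) (iset 12 (IC 0)))"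
definition descend :: com where "descend
  = Seq (iset 7 (ireg 8)) (Seq (iset 5 (ireg 3)) (iset 6 (ireg 9)))"
definition descend_step :: com where
  "descend_step = Seq load_root
    (If (IEq (ireg 8) (ireg 4)) emit_parent
    (Seq find_child_init (Seq (While find_guard find_child_step) descend)))"
definition vertex_init :: com where
  "vertex_init = Seq (iset 5 (IC 0)) (Seq (iset 6 p_val) (Seq (iset 7 (IC (-1))) (iset 11 (IC 0))))"
definition vertex_finish :: com where "vertex_finish = iset 4 (inc (ireg 4))"
definition vertex_step :: com where "vertex_step
  = Seq vertex_init (Seq (While descend_guard descend_step) vertex_finish)"
definition parents_prog :: com where "parents_prog
  = Seq (iset 4 (IC 0)) (While vertex_guard vertex_step)"

context dp_machine begin

definition frame_out :: "state \<Rightarrow> state \<Rightarrow> bool" where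
  "frame_out s s' \<longleftrightarrow> rmem s' = rmem s \<and> (\<forall>x y. x \<noteq> 1 \<longrightarrow> x \<noteq> 2 \<longrightarrow> imem s' (x,y) = imem s (x,y))"

lemma frame_out_rows_stored: "frame_out s s' \<Longrightarrow> rows_stored s k \<Longrightarrow> rows_stored s' k"
  unfolding frame_out_def rows_stored_def rooted_stored_def unrooted_stored_def unrooted_cell_def
    rooted_cell_def tree_cell_def by simp
lemma frame_out_input_stored: "frame_out s s' \<Longrightarrow> input_stored s \<Longrightarrow> input_stored s'"
  unfolding frame_out_def input_stored_def by simp
lemma frame_out_prefix_sums_stored: "frame_out s s' \<Longrightarrow> prefix_sums_stored s k \<Longrightarrow> prefix_sums_stored s' k"
  unfolding frame_out_def prefix_sums_stored_def by simp

definition tables_ready :: "state \<Rightarrow> bool" where "tables_ready s \<longleftrightarrow> ready s \<and> rows_stored s 0"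

lemma frame_out_tables_ready: "frame_out s s' \<Longrightarrow> within_cells s' \<Longrightarrow> tables_ready s \<Longrightarrow> tables_ready s'"
  unfolding tables_ready_def ready_def
    using frame_out_rows_stored frame_out_input_stored frame_out_prefix_sums_stored by blast

definition dp_out :: ctree where "dp_out = dp_tree 0 p"
definition parent_ok :: "nat \<Rightarrow> int \<Rightarrow> bool" where
  "parent_ok w x \<longleftrightarrow> (w = ct_root dp_out \<longrightarrow> x = -1) \<and> (w \<noteq> ct_root dp_out \<longrightarrow> x \<ge> 0
    \<and> (w, nat x) \<in> ct_edges dp_out)"
definition parents_stored :: "state \<Rightarrow> nat \<Rightarrow> bool" where
  "parents_stored s v \<longleftrightarrow> (\<forall>w<v. parent_ok w (imem s (1, int w)))"

definition find_child_frame :: "nat \<Rightarrow> nat \<Rightarrow> nat \<Rightarrow> int \<Rightarrow> nat \<Rightarrow> state \<Rightarrow> bool" where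
  "find_child_frame v cb cc par r s \<longleftrightarrow> tables_ready s \<and> parents_stored s v
    \<and> imem s (2,4) = int v \<and> imem s (2,5) = int cb \<and> imem s (2,6) = int cc \<and> imem s (2,7) = par
    \<and> imem s (2,8) = int r \<and> imem s (2,11) = 0
    \<and> Suc cb < cc \<and> cc \<le> p \<and> cb \<le> v \<and> v < cc \<and> r = dp_root cb cc \<and> v \<noteq> r"

definition scanning_rooted :: "nat \<Rightarrow> nat \<Rightarrow> nat \<Rightarrow> nat \<Rightarrow> nat \<Rightarrow> state \<Rightarrow> bool" where
  "scanning_rooted v cb cc r k s \<longleftrightarrow> imem s (2,12) = 0 \<and> imem s (2,10) = 0
    \<and> (\<exists>wa. imem s (2,9) = int wa \<and> cb < wa \<and> wa \<le> cc \<and> v < wa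
        \<and> set (rooted_entries cb wa) \<subseteq> set (rooted_entries cb cc) \<and> dp_root cb wa = r \<and> 2 * wa + 1 < k)"

definition scanning_unrooted :: "nat \<Rightarrow> nat \<Rightarrow> nat \<Rightarrow> nat \<Rightarrow> state \<Rightarrow> bool" where
  "scanning_unrooted v cb cc k s \<longleftrightarrow> imem s (2,12) = 0 \<and> imem s (2,10) = 1
    \<and> (\<exists>wa. imem s (2,9) = int wa \<and> v < wa \<and> wa < cc
        \<and> set (unrooted_entries cb wa) \<subseteq> set (rooted_entries cb cc) \<and> 2 * wa < k)"

definition child_found :: "nat \<Rightarrow> nat \<Rightarrow> nat \<Rightarrow> state \<Rightarrow> bool" where
  "child_found v cb cc s \<longleftrightarrow> imem s (2,12) = 1
    \<and> (\<exists>ar wa. imem s (2,3) = int ar \<and> imem s (2,9) = int wa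
      \<and> Some (dp_tree ar wa) \<in> set (rooted_entries cb cc)
        \<and> ar \<le> v \<and> v < wa \<and> cb \<le> ar \<and> wa \<le> cc \<and> wa - ar < cc - cb)"

definition find_child_inv :: "nat \<Rightarrow> nat \<Rightarrow> nat \<Rightarrow> int \<Rightarrow> nat \<Rightarrow> nat \<Rightarrow> state \<Rightarrow> bool" where
  "find_child_inv v cb cc par r k s \<longleftrightarrow> find_child_frame v cb cc par r s
    \<and> (scanning_rooted v cb cc r k s \<or> scanning_unrooted v cb cc k s \<or> child_found v cb cc s)"

lemma find_child_frame_step:
  assumes I: "find_child_frame v cb cc par r s" and wa: "imem s (2,9) = int wa" "wa \<le> p"
  shows "find_child_frame v cb cc par r (lf_exec find_child_step s)"
proof -
  let ?s' = "lf_exec find_child_step s"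
  have ready: "tables_ready s" and "within_cells s" using I
    unfolding find_child_frame_def tables_ready_def ready_def by auto
  then have "frame_out s ?s' \<and> within_cells ?s'
      \<and> (\<forall>j. j \<noteq> 3 \<longrightarrow> j \<noteq> 9 \<longrightarrow> j \<noteq> 10 \<longrightarrow> j \<noteq> 12 \<longrightarrow> imem ?s' (2,j) = imem s (2,j))
      \<and> (\<forall>w. imem ?s' (1,w) = imem s (1,w))"
    using I wa unfolding find_child_frame_def frame_out_def find_child_step_def within_cells_def
      int_cells_def
    by auto
  then show ?thesis
    using I frame_out_tables_ready[OF _ _ ready] unfolding find_child_frame_def parents_stored_def
      by auto
qed

lemma find_child_step_rooted:
  assumes I: "find_child_frame v cb cc par r s" and scan: "scanning_rooted v cb cc r k s"
  shows "0 < k \<and> (scanning_rooted v cb cc r (k - 1) (lf_exec find_child_step s)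
    \<or> scanning_unrooted v cb cc (k - 1) (lf_exec find_child_step s)
      \<or> child_found v cb cc (lf_exec find_child_step s))"
proof -
  have B: "imem s (2,4) = int v" "imem s (2,5) = int cb" "cc \<le> p" "r = dp_root cb cc" "v \<noteq> r"
    and R0: "rows_stored s 0" using I unfolding find_child_frame_def tables_ready_def by auto
  obtain wa where w: "imem s (2,9) = int wa" "cb < wa" "wa \<le> cc" "v < wa"
    "set (rooted_entries cb wa) \<subseteq> set (rooted_entries cb cc)" "dp_root cb wa = r" "2 * wa + 1 < k"
    and flags: "imem s (2,12) = 0" "imem s (2,10) = 0"
    using scan unfolding scanning_rooted_def by auto
  let ?s' = "lf_exec find_child_step s"
  define c where "c = snd (opt_rooted cb wa)"
  have cv: "imem s (rooted_cell cb wa) = int c"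
    using R0 w(2,3) B(3) unfolding rows_stored_def rooted_stored_def c_def by simp
  have "c = wa \<or> (cb < c \<and> c < wa)" using opt_rooted_argmin[OF w(2)] c_def by blast
  then consider (copy) "c = wa" | (below) "cb < c" "c < wa" "c \<le> v" | (above) "cb < c" "c < wa" "v < c"
    by linarith
  then show ?thesis
  proof cases
    case copy
    have "dp_root cb wa = wa - 1" and entries: "rooted_entries cb wa
      = unrooted_entries cb (wa - 1) @ [None]"
      using rooted_entries_copy[OF w(2)] copy c_def by auto
    then have "v < wa - 1" using w(4,6) B(5) by auto
    moreover have "imem ?s' (2,12) = 0" "imem ?s' (2,10) = 1" "imem ?s' (2,9) = int (wa - 1)"
      using flags w(1,2) cv copy B(1,2) unfolding find_child_step_def rooted_cell_def by auto
    ultimately have "scanning_unrooted v cb cc (k - 1) ?s'"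
      unfolding scanning_unrooted_def using w entries by (intro conjI exI[of _ "wa - 1"]) auto
    then show ?thesis using w(7) by simp
  next
    case below
    have "rooted_entries cb wa = rooted_entries cb c @ [Some (dp_tree c wa)]"
      using rooted_entries_split[of cb wa] below c_def by auto
    moreover have "imem ?s' (2,12) = 1" "imem ?s' (2,3) = int c" "imem ?s' (2,9) = int wa"
      using flags w(1) cv below B(1,2) unfolding find_child_step_def rooted_cell_def by auto
    ultimately have "child_found v cb cc ?s'"
      unfolding child_found_def using w below by (intro conjI exI[of _ c] exI[of _ wa]) auto
    then show ?thesis using w(7) by simp
  next
    case above
    have "rooted_entries cb wa = rooted_entries cb c @ [Some (dp_tree c wa)]" "dp_root cb wa
      = dp_root cb c"
      using rooted_entries_split[of cb wa] above c_def by auto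
    moreover have "imem ?s' (2,12) = 0" "imem ?s' (2,10) = 0" "imem ?s' (2,9) = int c"
      using flags w(1) cv above B(1,2) unfolding find_child_step_def rooted_cell_def by auto
    ultimately have "scanning_rooted v cb cc r (k - 1) ?s'"
      unfolding scanning_rooted_def using w above by (intro conjI exI[of _ c]) auto
    then show ?thesis using w(7) by simp
  qed
qed

lemma find_child_step_unrooted:
  assumes I: "find_child_frame v cb cc par r s" and scan: "scanning_unrooted v cb cc k s"
  shows "0 < k \<and> (scanning_unrooted v cb cc (k - 1) (lf_exec find_child_step s)
    \<or> child_found v cb cc (lf_exec find_child_step s))"
proof -
  have B: "imem s (2,4) = int v" "imem s (2,5) = int cb" "cc \<le> p" "cb \<le> v"
    and R0: "rows_stored s 0" using I unfolding find_child_frame_def tables_ready_def by auto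
  obtain wa where w: "imem s (2,9) = int wa" "v < wa" "wa < cc"
    "set (unrooted_entries cb wa) \<subseteq> set (rooted_entries cb cc)" "2 * wa < k"
    and flags: "imem s (2,12) = 0" "imem s (2,10) = 1"
    using scan unfolding scanning_unrooted_def by auto
  let ?s' = "lf_exec find_child_step s"
  have cb_wa: "cb < wa" using w(2) B(4) by simp
  define c where "c = snd (opt_unrooted cb wa)"
  have cv: "imem s (unrooted_cell cb wa) = int c"
    using R0 cb_wa w(3) B(3) unfolding rows_stored_def unrooted_stored_def c_def by simp
  have c: "cb \<le> c" "c < wa" using opt_unrooted_argmin[OF cb_wa] c_def by auto
  have entries: "unrooted_entries cb wa = unrooted_entries cb c @ [Some (dp_tree c wa)]"
    using unrooted_entries_split[OF cb_wa] c_def by simp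
  show ?thesis
  proof (cases "c \<le> v")
    case True
    have "imem ?s' (2,12) = 1" "imem ?s' (2,3) = int c" "imem ?s' (2,9) = int wa"
      using flags w(1) cv True B(1,2) unfolding find_child_step_def unrooted_cell_def by auto
    then have "child_found v cb cc ?s'"
      unfolding child_found_def using w c True entries by (intro conjI exI[of _ c] exI[of _ wa]) auto
    then show ?thesis using w(5) by simp
  next
    case False
    have "imem ?s' (2,12) = 0" "imem ?s' (2,10) = 1" "imem ?s' (2,9) = int c"
      using flags w(1) cv False B(1,2) unfolding find_child_step_def unrooted_cell_def by auto
    then have "scanning_unrooted v cb cc (k - 1) ?s'"
      unfolding scanning_unrooted_def using w c False entries by (intro conjI exI[of _ c]) auto
    then show ?thesis using w(5) by simp
  qed
qed

lemma find_child_step_ok: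
  assumes I: "find_child_inv v cb cc par r k s" and g: "bval find_guard s"
  shows "0 < k \<and> find_child_inv v cb cc par r (k - 1) (lf_exec find_child_step s)"
proof -
  have frame: "find_child_frame v cb cc par r s" and "cc \<le> p" using I
    unfolding find_child_inv_def find_child_frame_def by auto
  have "\<not> child_found v cb cc s" using g unfolding child_found_def by auto
  then consider "scanning_rooted v cb cc r k s" | "scanning_unrooted v cb cc k s"
    using I unfolding find_child_inv_def by blast
  then show ?thesis
  proof cases
    case 1
    then obtain wa where "imem s (2,9) = int wa" "wa \<le> p"
      using \<open>cc \<le> p\<close> unfolding scanning_rooted_def by auto
    then show ?thesis
      using find_child_frame_step[OF frame] find_child_step_rooted[OF frame 1]
        unfolding find_child_inv_def by blast
  next
    case 2
    then obtain wa where "imem s (2,9) = int wa" "wa \<le> p"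
      using \<open>cc \<le> p\<close> unfolding scanning_unrooted_def by auto
    then show ?thesis
      using find_child_frame_step[OF frame] find_child_step_unrooted[OF frame 2]
        unfolding find_child_inv_def by blast
  qed
qed

definition steps_find_child :: nat where "steps_find_child = (2 * p
  + 2) * (lf_steps find_child_step + 1 + bcost find_guard) + 1 + bcost find_guard"
definition steps_descend_rest :: nat where "steps_descend_rest = lf_steps emit_parent
  + (lf_steps find_child_init + (steps_find_child + lf_steps descend))"
definition steps_descend :: nat where "steps_descend = lf_steps load_root + (1
  + bcost (IEq (ireg 8) (ireg 4)) + steps_descend_rest)"
definition steps_descents :: nat where "steps_descents = Suc p * (steps_descend + 1
  + bcost descend_guard) + 1 + bcost descend_guard"
definition steps_vertex :: nat where "steps_vertex = lf_steps vertex_init + (steps_descents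
  + lf_steps vertex_finish)"
definition steps_vertices :: nat where "steps_vertices = p * (steps_vertex + 1
  + bcost vertex_guard) + 1 + bcost vertex_guard"

definition parent_emitted :: "nat \<Rightarrow> state \<Rightarrow> bool" where
  "parent_emitted v s \<longleftrightarrow> imem s (2,11) = 1 \<and> parent_ok v (imem s (1, int v))"

definition descending :: "nat \<Rightarrow> nat \<Rightarrow> state \<Rightarrow> bool" where
  "descending v k s \<longleftrightarrow> imem s (2,11) = 0
    \<and> (\<exists>cb cc. imem s (2,5) = int cb \<and> imem s (2,6) = int cc \<and> cb \<le> v \<and> v < cc \<and> cc \<le> p \<and> cc - cb < k
        \<and> ct_edges (dp_tree cb cc) \<subseteq> ct_edges dp_out
          \<and> parent_ok (ct_root (dp_tree cb cc)) (imem s (2,7)))"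

lemma descendingI:
  "imem s (2,11) = 0 \<Longrightarrow> imem s (2,5) = int cb \<Longrightarrow> imem s (2,6) = int cc \<Longrightarrow>
   cb \<le> v \<Longrightarrow> v < cc \<Longrightarrow> cc \<le> p \<Longrightarrow> cc - cb < k \<Longrightarrow> ct_edges (dp_tree cb cc) \<subseteq> ct_edges dp_out \<Longrightarrow>
   parent_ok (ct_root (dp_tree cb cc)) (imem s (2,7)) \<Longrightarrow> descending v k s"
  unfolding descending_def by blast

definition descend_inv :: "nat \<Rightarrow> nat \<Rightarrow> state \<Rightarrow> bool" where
  "descend_inv v k s \<longleftrightarrow> tables_ready s \<and> parents_stored s v \<and> v < p \<and> imem s (2,4) = int v
    \<and> (parent_emitted v s \<or> descending v k s)"

lemma find_child_loop:
  "find_child_inv v cb cc par r k s \<Longrightarrow> bval find_guard s \<Longrightarrow>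
   0 < k \<and> runs find_child_step s (find_child_inv v cb cc par r (k - 1)) (lf_steps find_child_step)"
  using find_child_step_ok[of v cb cc par r k s]
    by (auto intro!: runs_loop_free simp: find_child_step_def)

lemma load_root_ok:
  assumes "tables_ready s" "imem s (2,5) = int cb" "imem s (2,6) = int cc" "cb < cc" "cc \<le> p"
  shows "imem (lf_exec load_root s) (2,8) = int (ct_root (dp_tree cb cc))"
proof (cases "cc \<le> Suc cb")
  case True
  then show ?thesis using assms unfolding load_root_def dp_tree_root by simp
next
  case False
  then have "rooted_stored s cb cc" using assms unfolding tables_ready_def rows_stored_def by simp
  then show ?thesis
    using assms False unfolding load_root_def dp_tree_root rooted_stored_def tree_cell_def by simp
qed

lemma emit_parent_ok:
  assumes "tables_ready s" "parents_stored s v" "v < p" "imem s (2,4) = int v"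
    "parent_ok v (imem s (2,7))"
  shows "descend_inv v k (lf_exec emit_parent s)"
proof -
  let ?s' = "lf_exec emit_parent s"
  have "within_cells ?s'"
    using assms unfolding tables_ready_def ready_def within_cells_def int_cells_def emit_parent_def
      by simp
  then have "tables_ready ?s'"
    using frame_out_tables_ready[OF _ _ assms(1)] unfolding frame_out_def emit_parent_def by simp
  then show ?thesis
    using assms unfolding descend_inv_def parent_emitted_def parents_stored_def emit_parent_def by simp
qed

lemma find_child_init_ok:
  assumes "find_child_frame v cb cc par r s"
  shows "find_child_inv v cb cc par r (2 * cc + 2) (lf_exec find_child_init s)"
proof -
  let ?s' = "lf_exec find_child_init s"
  have "within_cells ?s'"
    using assms unfolding find_child_frame_def tables_ready_def ready_def within_cells_def int_cells_def
      find_child_init_def by simp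
  then have "find_child_frame v cb cc par r ?s'"
    using assms frame_out_tables_ready[of s ?s']
    unfolding find_child_frame_def frame_out_def parents_stored_def find_child_init_def by simp
  moreover have "scanning_rooted v cb cc r (2 * cc + 2) ?s'"
    using assms unfolding find_child_frame_def scanning_rooted_def find_child_init_def by auto
  ultimately show ?thesis unfolding find_child_inv_def by blast
qed

lemma descend_ok:
  assumes W: "find_child_inv v cb cc par r j s" and found: "child_found v cb cc s"
    and edges: "ct_edges (dp_tree cb cc) \<subseteq> ct_edges dp_out" and k: "cc - cb < k"
  shows "descend_inv v (k - 1) (lf_exec descend s)"
proof -
  obtain ar wa where aw: "imem s (2,3) = int ar" "imem s (2,9) = int wa"
    "Some (dp_tree ar wa) \<in> set (rooted_entries cb cc)" "ar \<le> v" "v < wa" "wa \<le> cc" "wa - ar < cc - cb"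
    using found unfolding child_found_def by auto
  have B: "tables_ready s" "parents_stored s v" "imem s (2,4) = int v" "imem s (2,8) = int r"
    "Suc cb < cc" "r = dp_root cb cc" "v < cc" "cc \<le> p" "imem s (2,11) = 0"
    using W unfolding find_child_inv_def find_child_frame_def by auto
  let ?s' = "lf_exec descend s"
  have "within_cells ?s'"
    using B(1) unfolding tables_ready_def ready_def within_cells_def int_cells_def descend_def by simp
  then have ready: "tables_ready ?s'"
    using frame_out_tables_ready[OF _ _ B(1)] unfolding frame_out_def descend_def by simp
  have child: "(ct_root (dp_tree ar wa), r) \<in> ct_edges dp_out"
    "ct_edges (dp_tree ar wa) \<subseteq> ct_edges dp_out"
    using dp_tree_child_edges[OF B(5) aw(3)] B(6) edges by auto
  have "ct_wf dp_out" using dp_tree_attains(1)[of 0 p] B(7,8) unfolding dp_out_def tree_attains_def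
    by simp
  then have "parent_ok (ct_root (dp_tree ar wa)) (int r)"
    using ct_edges_source[OF _ child(1)] child(1) unfolding parent_ok_def by simp
  moreover have "imem ?s' (2,5) = int ar" "imem ?s' (2,6) = int wa" "imem ?s' (2,7) = int r"
    "imem ?s' (2,11) = 0"
    using B aw unfolding descend_def by simp_all
  moreover have "wa - ar < k - 1" "wa \<le> p" using aw B k by auto
  ultimately have "descending v (k - 1) ?s'"
    using aw(4,5) child(2) by (intro descendingI[of _ ar wa]) simp_all
  then show ?thesis
    using ready B unfolding descend_inv_def parents_stored_def descend_def by simp
qed

lemma find_child_then_descend:
  assumes frame: "find_child_frame v cb cc par r s" and "cc - cb < k"
    and "ct_edges (dp_tree cb cc) \<subseteq> ct_edges dp_out"
  shows "runs (Seq find_child_init (Seq (While find_guard find_child_step) descend)) s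
    (descend_inv v (k - 1))
    (lf_steps find_child_init + (steps_find_child + lf_steps descend))"
proof (rule runs_SeqI[where R = "\<lambda>s'. s' = lf_exec find_child_init s"])
  show "runs find_child_init s (\<lambda>s'. s' = lf_exec find_child_init s) (lf_steps find_child_init)"
    by (rule runs_loop_free) (simp_all add: find_child_init_def)
next
  fix s1 assume "s1 = lf_exec find_child_init s"
  then have inv: "find_child_inv v cb cc par r (2 * cc + 2) s1"
    using find_child_init_ok[OF frame] by simp
  have "cc \<le> p" using frame unfolding find_child_frame_def by simp
  show "runs (Seq (While find_guard find_child_step) descend) s1 (descend_inv v (k - 1))
      (steps_find_child + lf_steps descend)"
  proof (rule runs_SeqI)
    show "runs (While find_guard find_child_step) s1
        (\<lambda>s'. \<exists>j. find_child_inv v cb cc par r j s' \<and> \<not> bval find_guard s') steps_find_child"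
      unfolding steps_find_child_def by (rule runs_WhileI[OF find_child_loop inv]) (use \<open>cc
        \<le> p\<close> in auto)
  next
    fix s2 assume "\<exists>j. find_child_inv v cb cc par r j s2 \<and> \<not> bval find_guard s2"
    then obtain j where W: "find_child_inv v cb cc par r j s2" and "child_found v cb cc s2"
      unfolding find_child_inv_def scanning_rooted_def scanning_unrooted_def by auto
    then show "runs descend s2 (descend_inv v (k - 1)) (lf_steps descend)"
      using descend_ok[OF W _ assms(3,2)] by (intro runs_loop_free) (simp_all add: descend_def)
  qed
qed

lemma descend_loop:
  assumes I: "descend_inv v k s" and g: "bval descend_guard s"
  shows "0 < k \<and> runs descend_step s (descend_inv v (k - 1)) steps_descend"
proof -
  have B: "tables_ready s" "parents_stored s v" "v < p" "imem s (2,4) = int v"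
    and "descending v k s" using I g unfolding descend_inv_def parent_emitted_def by auto
  then obtain cb cc where c: "imem s (2,5) = int cb" "imem s (2,6) = int cc" "cb \<le> v" "v < cc" "cc \<le> p"
    "cc - cb < k" "ct_edges (dp_tree cb cc) \<subseteq> ct_edges dp_out"
      "parent_ok (ct_root (dp_tree cb cc)) (imem s (2,7))"
    "imem s (2,11) = 0"
    unfolding descending_def by auto
  define r where "r = ct_root (dp_tree cb cc)"
  let ?s1 = "lf_exec load_root s"
  have r: "imem ?s1 (2,8) = int r" using load_root_ok[OF B(1) c(1,2) _ c(5)] c(3,4) unfolding r_def
    by simp
  have "within_cells ?s1"
    using B(1) unfolding tables_ready_def ready_def within_cells_def int_cells_def load_root_def by simp
  then have s1: "tables_ready ?s1" "parents_stored ?s1 v"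
    "\<forall>j. j \<noteq> 8 \<longrightarrow> imem ?s1 (2,j) = imem s (2,j)"
    using frame_out_tables_ready[OF _ _ B(1)] B(2)
    unfolding frame_out_def parents_stored_def load_root_def by simp_all
  have branch: "runs
    (If (IEq (ireg 8) (ireg 4)) emit_parent
    (Seq find_child_init (Seq (While find_guard find_child_step) descend)))
      ?s1 (descend_inv v (k - 1)) (1 + bcost (IEq (ireg 8) (ireg 4)) + steps_descend_rest)"
  proof (rule runs_If)
    assume "bval (IEq (ireg 8) (ireg 4)) ?s1"
    then have "r = v" using r s1(3) B(4) by auto
    then have "descend_inv v (k - 1) (lf_exec emit_parent ?s1)"
      using emit_parent_ok[OF s1(1,2) B(3)] s1(3) B(4) c(8) unfolding r_def by simp
    then show "runs emit_parent ?s1 (descend_inv v (k - 1)) steps_descend_rest"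
      by (intro runs_loop_free) (simp_all add: emit_parent_def steps_descend_rest_def)
  next
    assume "\<not> bval (IEq (ireg 8) (ireg 4)) ?s1"
    then have "r \<noteq> v" using r s1(3) B(4) by auto
    then have cb_cc: "Suc cb < cc" using c(3,4) unfolding r_def dp_tree_root by (auto split: if_splits)
    then have frame: "find_child_frame v cb cc (imem s (2,7)) r ?s1"
      using s1 B(4) c r \<open>r \<noteq> v\<close> unfolding find_child_frame_def r_def dp_tree_root by auto
    then have "runs (Seq find_child_init (Seq (While find_guard find_child_step) descend)) ?s1
      (descend_inv v (k - 1))
        (lf_steps find_child_init + (steps_find_child + lf_steps descend))"
      using c(6,7) by (rule find_child_then_descend)
    then show "runs (Seq find_child_init (Seq (While find_guard find_child_step) descend)) ?s1
        (descend_inv v (k - 1)) steps_descend_rest"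
      unfolding steps_descend_rest_def by (rule runs_mono) simp_all
  qed
  have "runs descend_step s (descend_inv v (k - 1)) steps_descend"
    unfolding descend_step_def steps_descend_def
  proof (rule runs_SeqI[where R = "\<lambda>s'. s' = ?s1"])
    show "runs load_root s (\<lambda>s'. s' = ?s1) (lf_steps load_root)"
      by (rule runs_loop_free) (simp_all add: load_root_def)
  qed (use branch in simp)
  then show ?thesis using c(6) by simp
qed


definition vertex_inv :: "nat \<Rightarrow> state \<Rightarrow> bool" where
  "vertex_inv k s \<longleftrightarrow> tables_ready s \<and> (\<exists>v. imem s (2,4) = int v \<and> v \<le> p \<and> k = p - v
    \<and> parents_stored s v)"

lemma vertex_init_ok:
  assumes "tables_ready s" "parents_stored s v" "imem s (2,4) = int v" "v < p"
  shows "descend_inv v (Suc p) (lf_exec vertex_init s)"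
proof -
  let ?s' = "lf_exec vertex_init s"
  have "within_cells ?s'"
    using assms(1) unfolding tables_ready_def ready_def within_cells_def int_cells_def
      vertex_init_def by simp
  then have "tables_ready ?s'"
    using frame_out_tables_ready[OF _ _ assms(1)] unfolding frame_out_def vertex_init_def by simp
  moreover have "imem s (0,0) = int p" using assms(1)
    unfolding tables_ready_def ready_def input_stored_def by simp
  then have "descending v (Suc p) ?s'"
    using assms(4) by (intro descendingI[of _ 0 p])
      (simp_all add: vertex_init_def dp_out_def parent_ok_def)
  ultimately show ?thesis
    using assms unfolding descend_inv_def parents_stored_def vertex_init_def by simp
qed

lemma vertex_finish_ok:
  assumes "descend_inv v j s" "\<not> bval descend_guard s"
  shows "tables_ready (lf_exec vertex_finish s) \<and> imem (lf_exec vertex_finish s) (2,4) = int (Suc v)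
    \<and> parents_stored (lf_exec vertex_finish s) (Suc v)"
proof -
  let ?s' = "lf_exec vertex_finish s"
  have "parent_ok v (imem s (1, int v))" and B: "tables_ready s" "parents_stored s v" "imem s (2,4)
    = int v"
    using assms unfolding descend_inv_def descending_def parent_emitted_def by auto
  moreover have "within_cells ?s'"
    using B(1) unfolding tables_ready_def ready_def within_cells_def int_cells_def
      vertex_finish_def by simp
  then have "tables_ready ?s'"
    using frame_out_tables_ready[OF _ _ B(1)] unfolding frame_out_def vertex_finish_def by simp
  ultimately show ?thesis
    unfolding parents_stored_def vertex_finish_def using less_Suc_eq by auto
qed

lemma vertex_loop:
  assumes I: "vertex_inv k s" and g: "bval vertex_guard s"
  shows "0 < k \<and> runs vertex_step s (vertex_inv (k - 1)) steps_vertex"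
proof -
  obtain v where v: "imem s (2,4) = int v" "v \<le> p" "k = p - v" "parents_stored s v" and B:
    "tables_ready s"
    using I unfolding vertex_inv_def by blast
  have "v < p" using g v(1) B unfolding tables_ready_def ready_def input_stored_def by simp
  have "runs vertex_step s (vertex_inv (k - 1)) steps_vertex"
    unfolding vertex_step_def steps_vertex_def
  proof (rule runs_SeqI[where R = "\<lambda>s'. s' = lf_exec vertex_init s"])
    show "runs vertex_init s (\<lambda>s'. s' = lf_exec vertex_init s) (lf_steps vertex_init)"
      by (rule runs_loop_free) (simp_all add: vertex_init_def)
  next
    fix s1 assume s1: "s1 = lf_exec vertex_init s"
    show "runs (Seq (While descend_guard descend_step) vertex_finish) s1 (vertex_inv (k - 1))
      (steps_descents + lf_steps vertex_finish)"
    proof (rule runs_SeqI[where R = "\<lambda>s. \<exists>j. descend_inv v j s \<and> \<not> bval descend_guard s"])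
      show "runs (While descend_guard descend_step) s1 (\<lambda>s. \<exists>j. descend_inv v j s
        \<and> \<not> bval descend_guard s) steps_descents"
        unfolding steps_descents_def s1
        by (rule runs_WhileI[OF descend_loop vertex_init_ok[OF B v(4,1) \<open>v < p\<close>]]) auto
    next
      fix s2 assume "\<exists>j. descend_inv v j s2 \<and> \<not> bval descend_guard s2"
      then obtain j where "descend_inv v j s2" "\<not> bval descend_guard s2" by blast
      then have "vertex_inv (k - 1) (lf_exec vertex_finish s2)"
        using vertex_finish_ok \<open>v < p\<close> v(3) unfolding vertex_inv_def
          by (intro conjI exI[of _ "Suc v"]) auto
      then show "runs vertex_finish s2 (vertex_inv (k - 1)) (lf_steps vertex_finish)"
        by (intro runs_loop_free) (simp_all add: vertex_finish_def)
    qed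
  qed
  then show ?thesis using \<open>v < p\<close> v(3) by simp
qed

lemma parents_prog_ok: "tables_ready s \<Longrightarrow> runs parents_prog s (\<lambda>s. tables_ready s
  \<and> parents_stored s p) (lf_steps (iset 4 (IC 0)) + steps_vertices)"
proof -
  assume B: "tables_ready s"
  let ?s1 = "lf_exec (iset 4 (IC 0)) s"
  have frame: "frame_out s ?s1" unfolding frame_out_def by simp
  have u: "within_cells ?s1" using B
    unfolding tables_ready_def ready_def within_cells_def int_cells_def by simp
  have VI1: "vertex_inv p ?s1" using frame_out_tables_ready[OF frame u B]
    unfolding vertex_inv_def parents_stored_def by simp
  show ?thesis unfolding parents_prog_def
  proof (rule runs_SeqI[where R = "vertex_inv p"])
    show "runs (iset 4 (IC 0)) s (vertex_inv p) (lf_steps (iset 4 (IC 0)))"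
      by (rule runs_loop_free) (use VI1 in simp_all)
  next
    fix s1 assume s1: "vertex_inv p s1"
    show "runs (While vertex_guard vertex_step) s1 (\<lambda>s. tables_ready s
      \<and> parents_stored s p) steps_vertices"
      unfolding steps_vertices_def
    proof (rule runs_WhileI[OF vertex_loop s1])
      fix j s assume a: "vertex_inv j s" "\<not> bval vertex_guard s"
      then obtain v where v: "imem s (2,4) = int v" "v \<le> p" "parents_stored s v" and R:
        "tables_ready s" unfolding vertex_inv_def by blast
      have "imem s (0,0) = int p" using R unfolding tables_ready_def ready_def input_stored_def by simp
      then have "v = p" using a(2) v(1,2) by simp
      then show "tables_ready s \<and> parents_stored s p" using R v(3) by simp
    qed auto
  qed
qed

end

definition dp_prog :: com where "dp_prog = Seq prefix_sums_prog (Seq tables_prog parents_prog)"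

context dp_machine begin

definition steps_total :: nat where
  "steps_total = steps_prefix_sums
     + ((lf_steps (iset 0 (dec p_val)) + steps_rows) + (lf_steps (iset 4 (IC 0)) + steps_vertices))"

lemma dp_prog_ok: "input_stored s \<Longrightarrow> within_cells s \<Longrightarrow> runs dp_prog s (\<lambda>s. within_cells s
  \<and> parents_stored s p) steps_total"
proof -
  assume i: "input_stored s" and u: "within_cells s"
  show ?thesis unfolding dp_prog_def steps_total_def
  proof (rule runs_SeqI[OF prefix_sums_ok[OF i u]])
    fix s1 assume "ready s1"
    show "runs (Seq tables_prog parents_prog) s1 (\<lambda>s. within_cells s
      \<and> parents_stored s p) (lf_steps (iset 0 (dec p_val)) + steps_rows + (lf_steps (iset 4 (IC 0))
      + steps_vertices))"
    proof (rule runs_SeqI[OF tables_prog_ok[OF \<open>ready s1\<close>]])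
      fix s2 assume "ready s2 \<and> rows_stored s2 0"
      then have "tables_ready s2" unfolding tables_ready_def by simp
      show "runs parents_prog s2 (\<lambda>s. within_cells s
        \<and> parents_stored s p) (lf_steps (iset 4 (IC 0)) + steps_vertices)"
        by (rule runs_mono[OF parents_prog_ok[OF \<open>tables_ready s2\<close>]])
          (auto simp: tables_ready_def ready_def)
    qed
  qed
qed

lemma steps_total_bound: "0 < p \<Longrightarrow> steps_total \<le> 10000 * p ^ 3"
proof -
  assume p: "0 < p"
  have a: "p \<le> p ^ 3" "p * p \<le> p ^ 3" "1 \<le> p ^ 3" "p * (p * p) = p ^ 3"
    using p by (simp_all add: power3_eq_cube)
  show ?thesis
    unfolding steps_total_def steps_prefix_sums_def steps_rows_def steps_row_def steps_columns_def
      steps_column_def steps_rooted_scan_def steps_unrooted_scan_def steps_vertices_def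
      steps_vertex_def steps_descents_def steps_descend_def steps_descend_rest_def steps_find_child_def
    unfolding prefix_sums_init_def prefix_sums_step_def rooted_scan_step_def unrooted_scan_step_def
      cand_cmd_def argmin_update_def rooted_scan_init_def rooted_scan_finish_def
      unrooted_scan_finish_def row_init_def row_finish_def
      find_child_step_def emit_parent_def find_child_init_def descend_def load_root_def
        vertex_init_def vertex_finish_def
    using a by (simp add: algebra_simps)
qed

lemma card_int_cells: "card int_cells \<le> 17 + 7 * p + 3 * (p * p)"
proof -
  define A where "A = {10..10 + int p}"
  define B where "B = {-10 - int p..-10}"
  have cA: "card A = p + 1" "card B = p + 1" unfolding A_def B_def by simp_all
  have int_cells: "int_cells = {(0,0)} \<union> ({1} \<times> {0..<int p}) \<union> ({2} \<times> {0..12}) \<union> (A \<times> A) \<union> (A \<times> B)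
    \<union> (B \<times> A)"
    unfolding int_cells_def A_def B_def by simp
  have "card int_cells \<le> card {(0::int,0::int)} + card ({1::int} \<times> {0..<int p})
    + card ({2::int} \<times> {0..12::int})
      + card (A \<times> A) + card (A \<times> B) + card (B \<times> A)"
    unfolding int_cells by (intro order_trans[OF card_Un_le] add_mono order_refl)+
  also have "\<dots> = 14 + p + 3 * ((p + 1) * (p + 1))" by (simp add: card_cartesian_product cA)
  also have "\<dots> = 17 + 7 * p + 3 * (p * p)" by (simp add: algebra_simps)
  finally show ?thesis .
qed

lemma card_real_cells: "card real_cells \<le> 11 + 8 * p + 3 * (p * p)"
proof -
  define A where "A = {10..10 + int p}"
  define B where "B = {-10 - int p..-10}"
  have cA: "card A = p + 1" "card B = p + 1" unfolding A_def B_def by simp_all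
  have real_cells: "real_cells = ({0} \<times> {0..<int p}) \<union> ({1} \<times> {0..2}) \<union> ({2} \<times> {0..int p})
    \<union> ({3} \<times> {0..3})
     \<union> (A \<times> A) \<union> (A \<times> B) \<union> (B \<times> A)"
    unfolding real_cells_def A_def B_def by simp
  have "card real_cells \<le> card ({0::int} \<times> {0..<int p}) + card ({1::int} \<times> {0..2::int})
    + card ({2::int} \<times> {0..int p})
      + card ({3::int} \<times> {0..3::int}) + card (A \<times> A) + card (A \<times> B) + card (B \<times> A)"
    unfolding real_cells by (intro order_trans[OF card_Un_le] add_mono order_refl)+
  also have "\<dots> = 7 + p + (p + 1) + 3 * ((p + 1) * (p + 1))" by (simp add: card_cartesian_product cA)
  also have "\<dots> = 11 + 8 * p + 3 * (p * p)" by (simp add: algebra_simps)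
  finally show ?thesis .
qed

lemma finite_int_cells: "finite int_cells" unfolding int_cells_def by simp
lemma finite_real_cells: "finite real_cells" unfolding real_cells_def by simp

lemma space_le: "0 < p \<Longrightarrow> within_cells s \<Longrightarrow> space s \<le> 10000 * p ^ 2"
proof -
  assume p: "0 < p" and u: "within_cells s"
  have "card (iused s) \<le> card int_cells" using u finite_int_cells unfolding within_cells_def
    by (intro card_mono) auto
  moreover have "card (rused s) \<le> card real_cells" using u finite_real_cells
    unfolding within_cells_def by (intro card_mono) auto
  moreover have "1 \<le> p * p" "p \<le> p * p" using p by simp_all
  ultimately have "space s \<le> 10000 * (p * p)" using card_int_cells card_real_cells
    unfolding space_def by linarith
  then show ?thesis by (simp add: power2_eq_square)
qed

lemma input_state_ok: "input_stored (input_state p m \<alpha> \<beta> \<gamma>)" "within_cells (input_state p m \<alpha> \<beta> \<gamma>)"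
  unfolding input_stored_def within_cells_def input_state_def int_cells_def real_cells_def by auto

lemma dp_prog_runs:
  assumes "0 < p"
  shows "\<exists>t s'. exec dp_prog (input_state p m \<alpha> \<beta> \<gamma>) t s' \<and> t \<le> 10000 * p ^ 3
    \<and> space s' \<le> 10000 * p ^ 2 \<and> outputs_tree p s' (dp_tree 0 p)"
proof -
  obtain t s' where "exec dp_prog (input_state p m \<alpha> \<beta> \<gamma>) t s'" "t \<le> steps_total"
    "within_cells s'" "parents_stored s' p"
    using dp_prog_ok[OF input_state_ok] unfolding runs_def by blast
  moreover have "outputs_tree p s' (dp_tree 0 p)"
    using \<open>parents_stored s' p\<close>
      unfolding outputs_tree_def parents_stored_def parent_ok_def dp_out_def by simp
  ultimately show ?thesis
    using steps_total_bound[OF assms] space_le[OF assms] by (meson order_trans)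
qed

end

theorem theorem2:
  "\<exists>(prog :: com) (c :: nat).
     \<forall>(p :: nat) (m :: nat \<Rightarrow> real) (\<alpha> :: real) (\<beta> :: real) (\<gamma> :: real).
       p \<ge> 1 \<and> (\<forall>i<p. m i \<ge> 0) \<and> \<alpha> \<ge> 0 \<and> \<beta> \<ge> 0 \<and> \<gamma> \<ge> 0 \<longrightarrow>
       (\<exists>t s'. exec prog (input_state p m \<alpha> \<beta> \<gamma>) t s'
          \<and> t \<le> c * p ^ 3 \<and> space s' \<le> c * p ^ 2
          \<and> (\<exists>T. is_ctree {0..<p} T \<and> strongly_ordered T \<and> outputs_tree p s' T
                 \<and> (\<forall>T'. is_ctree {0..<p} T' \<and> strongly_ordered T' \<longrightarrow>
                          ct_cost m \<alpha> \<beta> \<gamma> T \<le> ct_cost m \<alpha> \<beta> \<gamma> T')))"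
proof (rule exI[of _ dp_prog], rule exI[of _ 10000], intro allI impI)
  fix p :: nat and m :: "nat \<Rightarrow> real" and \<alpha> \<beta> \<gamma> :: real
  assume "p \<ge> 1 \<and> (\<forall>i<p. m i \<ge> 0) \<and> \<alpha> \<ge> 0 \<and> \<beta> \<ge> 0 \<and> \<gamma> \<ge> 0"
  then have "0 < p" by simp
  interpret dp_machine m \<alpha> \<beta> \<gamma> p .
  obtain t s' where "exec dp_prog (input_state p m \<alpha> \<beta> \<gamma>) t s'" "t \<le> 10000 * p ^ 3"
    "space s' \<le> 10000 * p ^ 2" "outputs_tree p s' (dp_tree 0 p)"
    using dp_prog_runs[OF \<open>0 < p\<close>] by blast
  then show "\<exists>t s'. exec dp_prog (input_state p m \<alpha> \<beta> \<gamma>) t s'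
          \<and> t \<le> 10000 * p ^ 3 \<and> space s' \<le> 10000 * p ^ 2
          \<and> (\<exists>T. is_ctree {0..<p} T \<and> strongly_ordered T \<and> outputs_tree p s' T
                 \<and> (\<forall>T'. is_ctree {0..<p} T' \<and> strongly_ordered T' \<longrightarrow>
                          ct_cost m \<alpha> \<beta> \<gamma> T \<le> ct_cost m \<alpha> \<beta> \<gamma> T'))"
    using dp_tree_optimal[OF \<open>0 < p\<close>] by blast
qed

end
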